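(* Let $X_1,\dots,X_n$, $\varepsilon$, $\gamma$ be as in the context, and let $L>0$ satisfy $L^3=L_{E,n}^3(\varepsilon,\gamma)$ or $L^3=L_{R,n}^3(\varepsilon,\gamma)$. Then: (i) for every $t\in\mathbb R$, $|\overline f_n(t)|\le\exp\{-k(L^3|t|,2\varepsilon|t|)\,t^2\}$; (ii) for every $L_0\ge L$, every $\tau\ge\underline\tau_1(L_0,\varepsilon):=\pi L_0^3/\varepsilon$ and every $|t|\le\tau/L^3$, $|\overline f_n(t)|\le\exp\{-k(\tau)t^2\}$; moreover $k(\tau)>0$ if and only if $\tau<\pi/4$, and the interval $[\underline\tau_1(L_0,\varepsilon),\pi/4)$ is nonempty if and only if $L_0<(\varepsilon/4)^{1/3}$; (iii) statements (i) and (ii) remain true when $L>0$ is defined instead by $L^3=\sup_{0<z\le\varepsilon}zL_n(z)$.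
   Context: Let $X_1,\dots,X_n$ be independent real random variables with $\mathbb E X_k=0$, $\sigma_k^2=\mathbb E X_k^2<\infty$, normalized so that $B_n^2=\sum_k\sigma_k^2=1$. Let $f_k(t)=\mathbb E e^{itX_k}$ and $\overline f_n(t)=\prod_{k=1}^nf_k(t)$. For $z\ge0$, $\sigma_k^2(z)=\mathbb E X_k^2\mathbf 1(|X_k|\ge z)$, $L_n(z)=\sum_k\sigma_k^2(z)$; for $z>0$, $M_n(z)=\sum_k\mathbb E X_k^3\mathbf 1(|X_k|<z)$. Fix $\gamma>0$. For $\varepsilon\in(0,\infty]$, $L_{E,n}^3(\varepsilon,\gamma)=\sup_{0<z\le\varepsilon}\{\gamma|M_n(z)|+zL_n(z)\}$; for $\varepsilon\in(0,\infty)$, $L_{R,n}^3(\varepsilon,\gamma)=\gamma|M_n(\varepsilon)|+\sup_{0<z\le\varepsilon}zL_n(z)$ ($\varepsilon$ ranges accordingly). Let $a(\theta)=2\frac{1-\cos\theta}{\theta^2}-\frac{\sin\theta}{2\theta}$, $b(\theta)=\frac{1-\cos\theta}{\theta^4}-\frac{\sin\theta}{2\theta^3}$ for $\theta\in(0,2\pi]$. For $\tau\ge0$, $u\ge0$, $\theta\in(0,2\pi]$ let $k(\tau,u,\theta)=a(\theta)-4\tau u^{-1}(a(\theta)+b(\theta)u^2)$ for $u>0$, $k(0,0,\theta)=a(\theta)$, $k(\tau,0,\theta)=-\infty$ for $\tau>0$; $k(\tau,u)=\sup_{0<\theta<2\pi}k\big(\tau,\min\{u,\sqrt{a(\theta)/b(\theta)}\},\theta\big)$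 (with $\min\{\infty,x\}=x$); and $k(\tau)=\sup_{0<\theta\le2\pi}\{a(\theta)-8\tau\sqrt{a(\theta)b(\theta)}\}$. *)

theory Defs
  imports "HOL-Probability.Probability"
begin

definition fchar :: "'a measure \<Rightarrow> (nat \<Rightarrow> 'a \<Rightarrow> real) \<Rightarrow> nat \<Rightarrow> real \<Rightarrow> complex" where
  "fchar M X k t = char (distr M borel (X k)) t"

definition fbar :: "'a measure \<Rightarrow> (nat \<Rightarrow> 'a \<Rightarrow> real) \<Rightarrow> nat \<Rightarrow> real \<Rightarrow> complex" where
  "fbar M X n t = (\<Prod>k\<in>{1..n}. fchar M X k t)"

definition sigma2z :: "'a measure \<Rightarrow> (nat \<Rightarrow> 'a \<Rightarrow> real) \<Rightarrow> nat \<Rightarrow> real \<Rightarrow> real" where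
  "sigma2z M X k z = (LINT \<omega>|M. (X k \<omega>)^2 * indicator {x. z \<le> \<bar>x\<bar>} (X k \<omega>))"

definition Ln :: "'a measure \<Rightarrow> (nat \<Rightarrow> 'a \<Rightarrow> real) \<Rightarrow> nat \<Rightarrow> real \<Rightarrow> real" where
  "Ln M X n z = (\<Sum>k\<in>{1..n}. sigma2z M X k z)"

definition Mn :: "'a measure \<Rightarrow> (nat \<Rightarrow> 'a \<Rightarrow> real) \<Rightarrow> nat \<Rightarrow> real \<Rightarrow> real" where
  "Mn M X n z = (\<Sum>k\<in>{1..n}. LINT \<omega>|M. (X k \<omega>)^3 * indicator {x. \<bar>x\<bar> < z} (X k \<omega>))"

(* L_{E,n}^3(eps,gamma), eps \<in> (0,\<infinity>], value in ereal (sup may be infinite a priori) *)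
definition LE3 :: "'a measure \<Rightarrow> (nat \<Rightarrow> 'a \<Rightarrow> real) \<Rightarrow> nat \<Rightarrow> ereal \<Rightarrow> real \<Rightarrow> ereal" where
  "LE3 M X n eps \<gamma> = (SUP z\<in>{z. 0 < z \<and> ereal z \<le> eps}.
      ereal (\<gamma> * \<bar>Mn M X n z\<bar> + z * Ln M X n z))"

definition LR3 :: "'a measure \<Rightarrow> (nat \<Rightarrow> 'a \<Rightarrow> real) \<Rightarrow> nat \<Rightarrow> real \<Rightarrow> real \<Rightarrow> ereal" where
  "LR3 M X n eps \<gamma> = ereal (\<gamma> * \<bar>Mn M X n eps\<bar>) +
      (SUP z\<in>{0<..eps}. ereal (z * Ln M X n z))"

definition LS3 :: "'a measure \<Rightarrow> (nat \<Rightarrow> 'a \<Rightarrow> real) \<Rightarrow> nat \<Rightarrow> ereal \<Rightarrow> ereal" where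
  "LS3 M X n eps = (SUP z\<in>{z. 0 < z \<and> ereal z \<le> eps}. ereal (z * Ln M X n z))"

definition afun :: "real \<Rightarrow> real" where
  "afun \<theta> = 2 * (1 - cos \<theta>) / \<theta>^2 - sin \<theta> / (2 * \<theta>)"

definition bfun :: "real \<Rightarrow> real" where
  "bfun \<theta> = (1 - cos \<theta>) / \<theta>^4 - sin \<theta> / (2 * \<theta>^3)"

definition k3 :: "real \<Rightarrow> real \<Rightarrow> real \<Rightarrow> ereal" where
  "k3 \<tau> u \<theta> =
     (if u > 0 then ereal (afun \<theta> - 4 * \<tau> / u * (afun \<theta> + bfun \<theta> * u^2))
      else if \<tau> = 0 then ereal (afun \<theta>) else -\<infinity>)"

definition k2 :: "real \<Rightarrow> ereal \<Rightarrow> ereal" where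
  "k2 \<tau> u = (SUP \<theta>\<in>{0<..<2*pi}.
      k3 \<tau> (real_of_ereal (min u (ereal (sqrt (afun \<theta> / bfun \<theta>))))) \<theta>)"

definition k1 :: "real \<Rightarrow> ereal" where
  "k1 \<tau> = (SUP \<theta>\<in>{0<..2*pi}. ereal (afun \<theta> - 8 * \<tau> * sqrt (afun \<theta> * bfun \<theta>)))"

(* underline tau_1(L0,eps) = pi L0^3 / eps  (= 0 if eps = \<infinity>) *)
definition tau1 :: "real \<Rightarrow> ereal \<Rightarrow> ereal" where
  "tau1 L0 eps = ereal (pi * L0^3) / eps"

definition cbrt_quarter :: "ereal \<Rightarrow> ereal" where
  "cbrt_quarter eps = (case eps of ereal e \<Rightarrow> ereal (root 3 (e / 4)) | _ \<Rightarrow> \<infinity>)"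

end

(*
  By symmetrization, |f_k(t)|^2 = E cos(t(X_k - X_k')) for an independent copy X_k'. For
  0 < \<theta> < 2 pi the quartic a(\<theta>) y^2 - b(\<theta>) y^4 lies below 1 - cos y on
  |y| \<le> sqrt(a/b) (it touches it at y = \<theta>). Using it for |x - y| < 2e and capping the
  quartic weight outside (-e, e) gives a pointwise lower bound for 1 - cos(t(x - y)) whose
  expectation involves only E X_k^2, the tails \<sigma>_k^2(e) and the truncated moments
  E X_k^2 min(X_k^2, e^2); summed over k, the latter are at most 2 e sup_{z \<le> e} z L_n(z),
  since E X^2 min(X^2, e^2) is the integral of 2 z \<sigma>^2(z) over (0, e). Hence
  |f_n(t)| \<le> exp(-(a - 2 L^3/e (a + 4 b t^2 e^2)) t^2) whenever 2 e |t| \<le> sqrt(a/b) and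
  z L_n(z) \<le> L^3 for z \<le> e. The choice 2 e |t| = min(2 \<epsilon> |t|, sqrt(a/b)) and the supremum over
  \<theta> give (i); the crude bound of that exponent by a - 8 \<tau> sqrt(a b) gives (ii). Writing
  r = sqrt(a/b), so that \<theta> < r \<le> 2 pi, one has a - 8 \<tau> sqrt(a b) = b r (r - 8 \<tau>), so
  k(\<tau>) > 0 exactly when 8 \<tau> < 2 pi. All three choices of L only enter through
  sup_{z \<le> \<epsilon>} z L_n(z) \<le> L^3, which also gives (iii).
*)

theory Submission
  imports Defs
begin

section \<open>Trigonometric estimates\<close>

lemma sin_ge_cubic:
  fixes x :: real assumes "0 \<le> x" shows "x - x ^ 3 / 6 \<le> sin x"
proof -
  have "\<bar>Im (iexp x - (1 + \<i> * x - x\<^sup>2 / 2))\<bar> \<le> x ^ 3 / 6"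
    using iexp_approx1[of x 2] abs_Im_le_cmod[of "iexp x - (1 + \<i> * x - x\<^sup>2 / 2)"] assms
    by (simp add: numeral_3_eq_3 numeral_2_eq_2 power2_eq_square algebra_simps fact_numeral)
  then show ?thesis by (simp add: Im_exp) argo
qed

lemma sin_minus_x_cos_pos:
  fixes y :: real assumes "0 < y" "y \<le> pi" shows "0 < sin y - y * cos y"
proof -
  have "(\<lambda>x. sin x - x * cos x) 0 < (\<lambda>x. sin x - x * cos x) y"
  proof (rule DERIV_pos_imp_increasing_open[OF assms(1)])
    fix x assume x: "0 < x" "x < y"
    have "((\<lambda>x. sin x - x * cos x) has_real_derivative x * sin x) (at x)"
      by (auto intro!: derivative_eq_intros)
    moreover have "0 < x * sin x" using x assms by (intro mult_pos_pos sin_gt_zero) auto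
    ultimately show "\<exists>d. ((\<lambda>x. sin x - x * cos x) has_real_derivative d) (at x) \<and> 0 < d"
      by blast
  qed (intro continuous_intros)
  then show ?thesis by simp
qed

lemma x_sin_lt_two_one_minus_cos:
  fixes y :: real assumes "0 < y" "y < 2 * pi" shows "y * sin y < 2 * (1 - cos y)"
proof (cases "y \<le> pi")
  case True
  have "(\<lambda>x. 2 * (1 - cos x) - x * sin x) 0 < (\<lambda>x. 2 * (1 - cos x) - x * sin x) y"
  proof (rule DERIV_pos_imp_increasing_open[OF assms(1)])
    fix x assume x: "0 < x" "x < y"
    have "((\<lambda>x. 2 * (1 - cos x) - x * sin x) has_real_derivative sin x - x * cos x) (at x)"
      by (auto intro!: derivative_eq_intros)
    moreover have "0 < sin x - x * cos x" using x True by (intro sin_minus_x_cos_pos) auto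
    ultimately show "\<exists>d. ((\<lambda>x. 2 * (1 - cos x) - x * sin x) has_real_derivative d) (at x) \<and> 0 < d"
      by blast
  qed (intro continuous_intros)
  then show ?thesis by simp
next
  case False
  then have "sin y < 0" using assms by (intro sin_lt_zero) auto
  then have "y * sin y < 0" using assms by (simp add: mult_pos_neg)
  then show ?thesis using cos_le_one[of y] by argo
qed

lemma one_minus_cos_pos:
  fixes y :: real assumes "0 < y" "y < 2 * pi" shows "0 < 1 - cos y"
proof -
  have "0 < sin (y / 2)" using assms by (intro sin_gt_zero) auto
  then show ?thesis using cos_double_sin[of "y / 2"] by simp
qed

lemma bfun_pos:
  assumes "0 < \<theta>" "\<theta> < 2 * pi" shows "0 < bfun \<theta>"
proof -
  have "bfun \<theta> = (2 * (1 - cos \<theta>) - \<theta> * sin \<theta>) / (2 * \<theta> ^ 4)"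
    using assms unfolding bfun_def by (simp add: field_simps eval_nat_numeral)
  then show ?thesis using x_sin_lt_two_one_minus_cos[OF assms] assms by simp
qed

lemma afun_minus_sq_bfun:
  assumes "0 < \<theta>" shows "afun \<theta> - \<theta>\<^sup>2 * bfun \<theta> = (1 - cos \<theta>) / \<theta>\<^sup>2"
  using assms unfolding afun_def bfun_def by (simp add: field_simps eval_nat_numeral)

lemma afun_pos:
  assumes "0 < \<theta>" "\<theta> < 2 * pi" shows "0 < afun \<theta>"
proof -
  have "0 < \<theta>\<^sup>2 * bfun \<theta>" using bfun_pos[OF assms] assms by simp
  moreover have "0 < (1 - cos \<theta>) / \<theta>\<^sup>2" using one_minus_cos_pos[OF assms] assms by simp
  ultimately show ?thesis using afun_minus_sq_bfun[of \<theta>] assms by linarith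
qed

lemma afun_2pi: "afun (2 * pi) = 0" and bfun_2pi: "bfun (2 * pi) = 0"
  unfolding afun_def bfun_def by simp_all

definition ab_kernel :: "real \<Rightarrow> real" where
  "ab_kernel y = 8 * (1 - cos y) - 5 * y * sin y + y\<^sup>2 * cos y"

lemma afun_has_derivative:
  assumes "0 < x" shows "(afun has_real_derivative - ab_kernel x / (2 * x ^ 3)) (at x)"
  unfolding afun_def[abs_def]
  by (rule derivative_eq_intros refl | use assms in \<open>simp; fail\<close>)+
     (use assms in \<open>simp add: ab_kernel_def field_simps eval_nat_numeral\<close>)

lemma bfun_has_derivative:
  assumes "0 < x" shows "(bfun has_real_derivative - ab_kernel x / (2 * x ^ 5)) (at x)"
  unfolding bfun_def[abs_def]
  by (rule derivative_eq_intros refl | use assms in \<open>simp; fail\<close>)+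
     (use assms in \<open>simp add: ab_kernel_def field_simps eval_nat_numeral\<close>)

lemma ab_kernel_deriv_nonneg:
  fixes x :: real assumes "0 \<le> x" "x \<le> pi"
  shows "0 \<le> 3 * (sin x - x * cos x) - x\<^sup>2 * sin x"
proof -
  let ?g = "\<lambda>x. 3 * (sin x - x * cos x) - x\<^sup>2 * sin x"
  have "?g 0 \<le> ?g x"
  proof (rule DERIV_nonneg_imp_nondecreasing[OF assms(1)])
    fix z :: real assume z: "0 \<le> z" "z \<le> x"
    have "(?g has_real_derivative z * (sin z - z * cos z)) (at z)"
      by (rule derivative_eq_intros refl | simp)+ (simp add: algebra_simps eval_nat_numeral)
    moreover have "0 \<le> z * (sin z - z * cos z)"
      using sin_minus_x_cos_pos[of z] z assms by (cases "z = 0") auto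
    ultimately show "\<exists>d. (?g has_real_derivative d) (at z) \<and> 0 \<le> d" by blast
  qed
  then show ?thesis by simp
qed

lemma ab_kernel_nonneg_0_pi:
  assumes "0 \<le> y" "y \<le> pi" shows "0 \<le> ab_kernel y"
proof -
  have "ab_kernel 0 \<le> ab_kernel y"
  proof (rule DERIV_nonneg_imp_nondecreasing[OF assms(1)])
    fix x assume x: "0 \<le> x" "x \<le> y"
    have "(ab_kernel has_real_derivative 3 * (sin x - x * cos x) - x\<^sup>2 * sin x) (at x)"
      unfolding ab_kernel_def[abs_def] by (rule derivative_eq_intros refl | simp)+
    then show "\<exists>d. (ab_kernel has_real_derivative d) (at x) \<and> 0 \<le> d"
      using ab_kernel_deriv_nonneg[of x] x assms by auto
  qed
  then show ?thesis by (simp add: ab_kernel_def)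
qed

lemma ab_kernel_nonneg_pi_2pi:
  assumes "pi \<le> y" "y \<le> 2 * pi" shows "0 \<le> ab_kernel y"
proof (cases "0 \<le> cos y")
  case True
  have "sin y \<le> 0" using assms sin_le_zero[of y] by (cases "y = 2 * pi") auto
  then have "0 \<le> - 5 * y * sin y" using assms pi_ge_zero by (simp add: mult_nonneg_nonpos)
  moreover have "0 \<le> y\<^sup>2 * cos y" using True by simp
  ultimately show ?thesis using cos_le_one[of y] unfolding ab_kernel_def by argo
next
  case False
  define p where "p = y - pi"
  have p0: "0 \<le> p" and y_eq: "y = pi + p" using assms by (auto simp: p_def)
  have cos_p: "0 < cos p" and sin_p: "sin y = - sin p" and cos_y: "cos y = - cos p"
    using False by (simp_all add: y_eq cos_add sin_add)
  have "p < pi / 2"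
  proof (rule ccontr)
    assume "\<not> p < pi / 2"
    then have "0 \<le> cos (pi - p)" using assms by (intro cos_ge_zero) (auto simp: p_def)
    then show False using cos_p by simp
  qed
  then have "p\<^sup>2 \<le> (pi / 2)\<^sup>2" using p0 by (intro power_mono) auto
  also have "\<dots> \<le> 3" using pi_approx mult_mono[of pi "3.2" pi "3.2"] by (simp add: power2_eq_square)
  finally have "p * p\<^sup>2 \<le> p * 3" using p0 by (intro mult_left_mono)
  then have "p ^ 3 / 6 \<le> p / 2" by (simp add: power3_eq_cube power2_eq_square)
  then have sin_p_ge: "p / 2 \<le> sin p" using sin_ge_cubic[OF p0] by linarith
  have y_sq: "8 \<le> y\<^sup>2" using power_mono[of 3 y 2] pi_gt3 y_eq p0 by simp
  have "(8 - y\<^sup>2) * (cos p - 1) \<ge> 0"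
    using y_sq cos_le_one[of p] by (intro mult_nonpos_nonpos) auto
  then have "8 - y\<^sup>2 \<le> (8 - y\<^sup>2) * cos p" by (simp add: algebra_simps)
  moreover have "5 * y * (p / 2) \<le> 5 * y * sin p"
    using sin_p_ge y_eq p0 pi_gt3 by (intro mult_left_mono) auto
  moreover have "ab_kernel y = 8 + (8 - y\<^sup>2) * cos p + 5 * y * sin p"
    unfolding ab_kernel_def cos_y sin_p by (simp add: algebra_simps)
  moreover have "8 + (8 - y\<^sup>2) + 5 * y * (p / 2) = (16 - pi\<^sup>2) + pi * p / 2 + 3 * p\<^sup>2 / 2"
    unfolding y_eq by (simp add: algebra_simps power2_eq_square)
  moreover have "pi\<^sup>2 < 16"
    using mult_strict_mono[OF pi_less_4 pi_less_4] by (simp add: power2_eq_square)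
  moreover have "0 \<le> pi * p" using p0 by simp
  moreover have "0 \<le> p\<^sup>2" by simp
  ultimately show ?thesis by argo
qed

lemma ab_kernel_nonneg:
  assumes "0 \<le> y" "y \<le> 2 * pi" shows "0 \<le> ab_kernel y"
  using ab_kernel_nonneg_0_pi ab_kernel_nonneg_pi_2pi assms by (cases "y \<le> pi") auto

text \<open>For fixed y the map x \<mapsto> afun x * y^2 - bfun x * y^4 has derivative
  ab_kernel x * y^2 * (y^2 - x^2) / (2 x^5), so it is maximal at x = y, where it equals 1 - cos y.\<close>

lemma quartic_le_one_minus_cos:
  assumes "0 < \<theta>" "\<theta> \<le> 2 * pi" "0 < y" "y \<le> 2 * pi"
  shows "afun \<theta> * y\<^sup>2 - bfun \<theta> * y ^ 4 \<le> 1 - cos y"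
proof -
  define \<Phi> where "\<Phi> x = afun x * y\<^sup>2 - bfun x * y ^ 4" for x
  have \<Phi>_deriv: "(\<Phi> has_real_derivative ab_kernel x * y\<^sup>2 * (y\<^sup>2 - x\<^sup>2) / (2 * x ^ 5)) (at x)"
    if "0 < x" for x
  proof -
    have "(\<Phi> has_real_derivative
        (- ab_kernel x / (2 * x ^ 3)) * y\<^sup>2 - (- ab_kernel x / (2 * x ^ 5)) * y ^ 4) (at x)"
      unfolding \<Phi>_def[abs_def]
      by (intro DERIV_diff DERIV_cmult_right afun_has_derivative bfun_has_derivative that)
    then show ?thesis using that by (simp add: field_simps eval_nat_numeral)
  qed
  have \<Phi>_y: "\<Phi> y = 1 - cos y"
    using assms unfolding \<Phi>_def afun_def bfun_def by (simp add: field_simps eval_nat_numeral)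
  have sign: "0 \<le> ab_kernel x * y\<^sup>2 / (2 * x ^ 5)" if "0 < x" "x \<le> 2 * pi" for x
    using ab_kernel_nonneg[of x] that by simp
  show ?thesis
  proof (cases "\<theta> \<le> y")
    case True
    have "\<Phi> \<theta> \<le> \<Phi> y"
    proof (rule DERIV_nonneg_imp_nondecreasing[OF True])
      fix x assume x: "\<theta> \<le> x" "x \<le> y"
      then have "0 \<le> y\<^sup>2 - x\<^sup>2" using assms by (simp add: power_mono)
      then have "0 \<le> ab_kernel x * y\<^sup>2 * (y\<^sup>2 - x\<^sup>2) / (2 * x ^ 5)"
        using sign[of x] x assms by (simp add: mult_nonneg_nonneg divide_simps)
      then show "\<exists>d. (\<Phi> has_real_derivative d) (at x) \<and> 0 \<le> d"
        using \<Phi>_deriv[of x] x assms by auto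
    qed
    then show ?thesis using \<Phi>_y unfolding \<Phi>_def by simp
  next
    case False
    have "\<Phi> \<theta> \<le> \<Phi> y"
    proof (rule DERIV_nonpos_imp_nonincreasing[of y \<theta> \<Phi>])
      show "y \<le> \<theta>" using False by simp
      fix x assume x: "y \<le> x" "x \<le> \<theta>"
      then have "y\<^sup>2 - x\<^sup>2 \<le> 0" using assms by (simp add: power_mono)
      then have "ab_kernel x * y\<^sup>2 * (y\<^sup>2 - x\<^sup>2) / (2 * x ^ 5) \<le> 0"
        using sign[of x] x assms by (simp add: mult_nonneg_nonpos divide_simps)
      then show "\<exists>d. (\<Phi> has_real_derivative d) (at x) \<and> d \<le> 0"
        using \<Phi>_deriv[of x] x assms by auto
    qed
    then show ?thesis using \<Phi>_y unfolding \<Phi>_def by simp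
  qed
qed

lemma afun_le_four_pi_sq_bfun:
  assumes "0 < \<theta>" "\<theta> < 2 * pi" shows "afun \<theta> \<le> 4 * pi\<^sup>2 * bfun \<theta>"
proof -
  have "afun \<theta> * (2 * pi)\<^sup>2 - bfun \<theta> * (2 * pi) ^ 4 \<le> 1 - cos (2 * pi)"
    using assms by (intro quartic_le_one_minus_cos) auto
  then have "(2 * pi)\<^sup>2 * (afun \<theta> - 4 * pi\<^sup>2 * bfun \<theta>) \<le> 0"
    by (simp add: algebra_simps eval_nat_numeral)
  then show ?thesis by (simp add: mult_le_0_iff)
qed

lemma sqrt_afun_div_bfun_le:
  assumes "0 < \<theta>" "\<theta> < 2 * pi" shows "sqrt (afun \<theta> / bfun \<theta>) \<le> 2 * pi"
proof -
  have "afun \<theta> / bfun \<theta> \<le> (2 * pi)\<^sup>2"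
    using afun_le_four_pi_sq_bfun[OF assms] bfun_pos[OF assms] by (simp add: divide_le_eq power_mult_distrib)
  then show ?thesis by (intro real_le_lsqrt) auto
qed

lemma sqrt_afun_div_bfun_gt:
  assumes "0 < \<theta>" "\<theta> < 2 * pi" shows "\<theta> < sqrt (afun \<theta> / bfun \<theta>)"
proof -
  have "0 < afun \<theta> - \<theta>\<^sup>2 * bfun \<theta>"
    using afun_minus_sq_bfun[of \<theta>] one_minus_cos_pos[OF assms] assms by simp
  then have "\<theta>\<^sup>2 < afun \<theta> / bfun \<theta>"
    using bfun_pos[OF assms] by (simp add: less_divide_eq algebra_simps)
  then show ?thesis using assms real_less_rsqrt by blast
qed

lemma sqrt_afun_mult_bfun:
  assumes "0 < \<theta>" "\<theta> < 2 * pi"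
  shows "afun \<theta> = bfun \<theta> * (sqrt (afun \<theta> / bfun \<theta>))\<^sup>2"
    and "sqrt (afun \<theta> * bfun \<theta>) = bfun \<theta> * sqrt (afun \<theta> / bfun \<theta>)"
proof -
  have a: "0 < afun \<theta>" and b: "0 < bfun \<theta>" using afun_pos bfun_pos assms by auto
  then show "afun \<theta> = bfun \<theta> * (sqrt (afun \<theta> / bfun \<theta>))\<^sup>2" by simp
  have "afun \<theta> * bfun \<theta> = (bfun \<theta>)\<^sup>2 * (afun \<theta> / bfun \<theta>)"
    using b by (simp add: power2_eq_square)
  then show "sqrt (afun \<theta> * bfun \<theta>) = bfun \<theta> * sqrt (afun \<theta> / bfun \<theta>)"
    using b by (metis real_sqrt_mult real_sqrt_abs abs_of_pos)
qed

lemma quartic_le_one_minus_cos_abs: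
  assumes "0 < \<theta>" "\<theta> < 2 * pi" "\<bar>y\<bar> \<le> sqrt (afun \<theta> / bfun \<theta>)"
  shows "afun \<theta> * y\<^sup>2 - bfun \<theta> * y ^ 4 \<le> 1 - cos y"
proof (cases "y = 0")
  case False
  have "afun \<theta> * \<bar>y\<bar>\<^sup>2 - bfun \<theta> * \<bar>y\<bar> ^ 4 \<le> 1 - cos \<bar>y\<bar>"
    using assms False sqrt_afun_div_bfun_le[OF assms(1,2)] by (intro quartic_le_one_minus_cos) auto
  then show ?thesis by (simp add: power2_abs power_even_abs_numeral)
qed simp

section \<open>A pointwise lower bound for 1 - cos\<close>

lemma weighted_square_diff_le:
  fixes x y p q s :: real
  assumes "0 \<le> q" "q \<le> p" "y\<^sup>2 \<le> x\<^sup>2" "s \<le> p"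
  shows "(x - y)\<^sup>2 * s \<le> 2 * x\<^sup>2 * p + 2 * y\<^sup>2 * q - 2 * x * y * (p + q)"
proof -
  have "(x - y)\<^sup>2 * s \<le> (x - y)\<^sup>2 * p" using assms by (intro mult_left_mono) auto
  moreover have "0 \<le> (p - q) * (x\<^sup>2 - y\<^sup>2)" "0 \<le> q * (x - y)\<^sup>2" using assms by auto
  moreover have "2 * x\<^sup>2 * p + 2 * y\<^sup>2 * q - 2 * x * y * (p + q) - (x - y)\<^sup>2 * p
      = (p - q) * (x\<^sup>2 - y\<^sup>2) + q * (x - y)\<^sup>2"
    by (simp add: algebra_simps power2_eq_square)
  ultimately show ?thesis by linarith
qed

lemma sq_le_of_le_sqrt_div:
  fixes A B e t :: real
  assumes "0 < B" "0 \<le> e" "2 * e * \<bar>t\<bar> \<le> sqrt (A / B)"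
  shows "4 * B * t\<^sup>2 * e\<^sup>2 \<le> A"
proof -
  have "0 \<le> 2 * e * \<bar>t\<bar>" using assms by simp
  then have "0 \<le> sqrt (A / B)" using assms(3) by linarith
  then have "0 \<le> A / B" by simp
  have "(2 * e * \<bar>t\<bar>)\<^sup>2 \<le> (sqrt (A / B))\<^sup>2"
    using assms \<open>0 \<le> 2 * e * \<bar>t\<bar>\<close> by (intro power_mono) auto
  then have "(2 * e * \<bar>t\<bar>)\<^sup>2 \<le> A / B" using \<open>0 \<le> A / B\<close> by simp
  then show ?thesis using assms(1) by (simp add: le_divide_eq power_mult_distrib algebra_simps)
qed

definition trunc_weight :: "real \<Rightarrow> real \<Rightarrow> real \<Rightarrow> real \<Rightarrow> real \<Rightarrow> real" where
  "trunc_weight A B t e x = (if \<bar>x\<bar> < e then 4 * B * t\<^sup>2 * x\<^sup>2 else A)"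

lemma trunc_weight_measurable [measurable]: "trunc_weight A B t e \<in> borel_measurable borel"
  unfolding trunc_weight_def[abs_def] by measurable

context
  fixes A B t e :: real
  assumes B: "0 \<le> B" and cap: "4 * B * t\<^sup>2 * e\<^sup>2 \<le> A"
begin

lemma trunc_weight_bounded: "0 \<le> trunc_weight A B t e x" "trunc_weight A B t e x \<le> A"
proof -
  have "4 * B * t\<^sup>2 * x\<^sup>2 \<le> 4 * B * t\<^sup>2 * e\<^sup>2" if "\<bar>x\<bar> < e"
    using that B abs_le_square_iff[of x e] by (intro mult_left_mono) auto
  then show "0 \<le> trunc_weight A B t e x" "trunc_weight A B t e x \<le> A"
    using B cap zero_le_power2[of t] zero_le_power2[of e]
    unfolding trunc_weight_def by (auto intro: order.trans[OF _ cap])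
qed

lemma trunc_weight_mono:
  assumes "\<bar>v\<bar> \<le> \<bar>u\<bar>" shows "trunc_weight A B t e v \<le> trunc_weight A B t e u"
proof -
  have "4 * B * t\<^sup>2 * v\<^sup>2 \<le> 4 * B * t\<^sup>2 * u\<^sup>2"
    using assms B by (intro mult_left_mono) (auto simp: abs_le_square_iff)
  then show ?thesis
    using assms trunc_weight_bounded(2)[of v] unfolding trunc_weight_def by auto
qed

lemma trunc_weight_ge_pair_weight:
  assumes "\<bar>w\<bar> \<le> 2 * \<bar>u\<bar>"
  shows "(if \<bar>w\<bar> < 2 * e then B * t\<^sup>2 * w\<^sup>2 else A) \<le> trunc_weight A B t e u"
proof (cases "\<bar>w\<bar> < 2 * e")
  case True
  have "B * t\<^sup>2 * w\<^sup>2 \<le> B * t\<^sup>2 * (2 * u)\<^sup>2"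
    using assms B abs_le_square_iff[of w "2 * u"] by (intro mult_left_mono) (auto simp: abs_mult)
  moreover have "B * t\<^sup>2 * w\<^sup>2 \<le> B * t\<^sup>2 * (2 * e)\<^sup>2"
    using True B abs_le_square_iff[of w "2 * e"] by (intro mult_left_mono) auto
  ultimately show ?thesis
    using True cap unfolding trunc_weight_def by (auto simp: power_mult_distrib)
qed (use assms in \<open>auto simp: trunc_weight_def\<close>)

lemma cross_terms_ge_pair_weight:
  "(x - y)\<^sup>2 * (if \<bar>x - y\<bar> < 2 * e then B * t\<^sup>2 * (x - y)\<^sup>2 else A)
    \<le> 2 * x\<^sup>2 * trunc_weight A B t e x + 2 * y\<^sup>2 * trunc_weight A B t e y
       - 2 * x * y * (trunc_weight A B t e x + trunc_weight A B t e y)"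
proof (cases "\<bar>y\<bar> \<le> \<bar>x\<bar>")
  case True
  have "\<bar>x - y\<bar> \<le> 2 * \<bar>x\<bar>" using True by linarith
  moreover have "y\<^sup>2 \<le> x\<^sup>2" using True abs_le_square_iff by blast
  ultimately show ?thesis
    by (intro weighted_square_diff_le trunc_weight_bounded(1) trunc_weight_mono True
        trunc_weight_ge_pair_weight)
next
  case False
  then have yx: "\<bar>x\<bar> \<le> \<bar>y\<bar>" by simp
  have "(y - x)\<^sup>2 * (if \<bar>x - y\<bar> < 2 * e then B * t\<^sup>2 * (x - y)\<^sup>2 else A)
    \<le> 2 * y\<^sup>2 * trunc_weight A B t e y + 2 * x\<^sup>2 * trunc_weight A B t e x
       - 2 * y * x * (trunc_weight A B t e y + trunc_weight A B t e x)"
    using yx abs_le_square_iff[of x y]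
    by (intro weighted_square_diff_le trunc_weight_bounded(1) trunc_weight_mono
        trunc_weight_ge_pair_weight) auto
  then show ?thesis by (simp add: power2_commute algebra_simps)
qed

end

lemma one_minus_cos_ge_trunc_weight:
  fixes A B t e x y :: real
  assumes "0 < B" "0 < e" and et: "2 * e * \<bar>t\<bar> \<le> sqrt (A / B)"
    and quartic: "\<And>y. \<bar>y\<bar> \<le> sqrt (A / B) \<Longrightarrow> A * y\<^sup>2 - B * y ^ 4 \<le> 1 - cos y"
  shows "A * t\<^sup>2 * (x - y)\<^sup>2 - t\<^sup>2 * (2 * x\<^sup>2 * trunc_weight A B t e x + 2 * y\<^sup>2 * trunc_weight A B t e y
           - 2 * x * y * (trunc_weight A B t e x + trunc_weight A B t e y)) \<le> 1 - cos (t * (x - y))"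
proof -
  define w where "w = x - y"
  define \<psi> where "\<psi> = (if \<bar>w\<bar> < 2 * e then B * t\<^sup>2 * w\<^sup>2 else A)"
  have cap: "4 * B * t\<^sup>2 * e\<^sup>2 \<le> A" using assms by (intro sq_le_of_le_sqrt_div) auto
  have "A * t\<^sup>2 * w\<^sup>2 - t\<^sup>2 * (w\<^sup>2 * \<psi>) \<le> 1 - cos (t * w)"
  proof (cases "\<bar>w\<bar> < 2 * e")
    case True
    have "\<bar>t * w\<bar> \<le> 2 * e * \<bar>t\<bar>" using True by (simp add: abs_mult mult.commute mult_left_mono)
    then have "A * (t * w)\<^sup>2 - B * (t * w) ^ 4 \<le> 1 - cos (t * w)" using quartic et by auto
    then show ?thesis unfolding \<psi>_def using True by (simp add: algebra_simps eval_nat_numeral)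
  qed (simp add: \<psi>_def)
  moreover have "t\<^sup>2 * (w\<^sup>2 * \<psi>) \<le> t\<^sup>2 * (2 * x\<^sup>2 * trunc_weight A B t e x
      + 2 * y\<^sup>2 * trunc_weight A B t e y - 2 * x * y * (trunc_weight A B t e x + trunc_weight A B t e y))"
    unfolding w_def \<psi>_def using assms(1) cap
    by (intro mult_left_mono cross_terms_ge_pair_weight) auto
  ultimately show ?thesis unfolding w_def by linarith
qed

section \<open>Symmetrization\<close>

lemma has_bochner_integral_mono:
  fixes f g :: "'a \<Rightarrow> real"
  assumes "has_bochner_integral M f a" "has_bochner_integral M g b" "\<And>x. f x \<le> g x"
  shows "a \<le> b"
  using integral_mono[of M f g] assms by (simp add: has_bochner_integral_iff)

lemma (in prob_space) cos_sin_moments_sq_le: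
  fixes X :: "'a \<Rightarrow> real" and u g :: "real \<Rightarrow> real" and t :: real
  assumes [measurable]: "X \<in> borel_measurable M" and iX: "integrable M X"
    and mean: "expectation X = 0"
    and iu: "integrable M (\<lambda>\<omega>. u (X \<omega>))" and ig: "integrable M (\<lambda>\<omega>. g (X \<omega>))"
    and bound: "\<And>x y. u x + u y + x * g y + g x * y \<le> 1 - cos (t * (x - y))"
  shows "(LINT \<omega>|M. cos (t * X \<omega>))\<^sup>2 + (LINT \<omega>|M. sin (t * X \<omega>))\<^sup>2
    \<le> 1 - 2 * expectation (\<lambda>\<omega>. u (X \<omega>))"
proof -
  define C where "C = (LINT \<omega>|M. cos (t * X \<omega>))"
  define S where "S = (LINT \<omega>|M. sin (t * X \<omega>))"
  define U where "U = expectation (\<lambda>\<omega>. u (X \<omega>))"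
  define G where "G = expectation (\<lambda>\<omega>. g (X \<omega>))"
  have icos: "integrable M (\<lambda>\<omega>. cos (t * X \<omega>))" and isin: "integrable M (\<lambda>\<omega>. sin (t * X \<omega>))"
    by (rule integrable_const_bound[where B=1]; simp)+
  have const: "has_bochner_integral M (\<lambda>_. c) c" for c :: real
    by (simp add: has_bochner_integral_iff prob_space)
  note integrals = has_bochner_integral_integrable[OF iX, unfolded mean]
    has_bochner_integral_integrable[OF iu, folded U_def]
    has_bochner_integral_integrable[OF ig, folded G_def]
    has_bochner_integral_integrable[OF icos, folded C_def]
    has_bochner_integral_integrable[OF isin, folded S_def]
  note linear = has_bochner_integral_add has_bochner_integral_diff
    has_bochner_integral_mult_left has_bochner_integral_mult_right
  have inner: "U + u y + G * y \<le> 1 - cos (t * y) * C - sin (t * y) * S" for y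
  proof -
    have "has_bochner_integral M (\<lambda>\<omega>. u (X \<omega>) + u y + X \<omega> * g y + g (X \<omega>) * y)
        (U + u y + 0 * g y + G * y)"
      by (intro linear const integrals)
    moreover have "has_bochner_integral M
        (\<lambda>\<omega>. 1 - cos (t * y) * cos (t * X \<omega>) - sin (t * y) * sin (t * X \<omega>))
        (1 - cos (t * y) * C - sin (t * y) * S)"
      by (intro linear const integrals)
    moreover have "u (X \<omega>) + u y + X \<omega> * g y + g (X \<omega>) * y
        \<le> 1 - cos (t * y) * cos (t * X \<omega>) - sin (t * y) * sin (t * X \<omega>)" for \<omega>
      using bound[of "X \<omega>" y] by (simp add: right_diff_distrib cos_diff algebra_simps)
    ultimately have "U + u y + 0 * g y + G * y \<le> 1 - cos (t * y) * C - sin (t * y) * S"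
      by (rule has_bochner_integral_mono)
    then show ?thesis by simp
  qed
  have "has_bochner_integral M (\<lambda>\<omega>. U + u (X \<omega>) + G * X \<omega>) (U + U + G * 0)"
    by (intro linear const integrals)
  moreover have "has_bochner_integral M (\<lambda>\<omega>. 1 - cos (t * X \<omega>) * C - sin (t * X \<omega>) * S)
      (1 - C * C - S * S)"
    by (intro linear const integrals)
  ultimately have "U + U + G * 0 \<le> 1 - C * C - S * S"
    using inner by (rule has_bochner_integral_mono)
  then show ?thesis unfolding C_def[symmetric] S_def[symmetric] U_def[symmetric]
    by (simp add: power2_eq_square)
qed

lemma integrable_mult_bounded:
  fixes f h :: "'a \<Rightarrow> real"
  assumes "integrable M f" "h \<in> borel_measurable M" "\<And>x. x \<in> space M \<Longrightarrow> \<bar>h x\<bar> \<le> c"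
  shows "integrable M (\<lambda>x. f x * h x)"
proof (rule Bochner_Integration.integrable_bound)
  show "integrable M (\<lambda>x. c * \<bar>f x\<bar>)" using assms(1) by (intro integrable_mult_right integrable_abs)
  show "(\<lambda>x. f x * h x) \<in> borel_measurable M" using assms by measurable
  show "AE x in M. norm (f x * h x) \<le> norm (c * \<bar>f x\<bar>)"
  proof (intro AE_I2 impI)
    fix x assume "x \<in> space M"
    then have "\<bar>f x\<bar> * \<bar>h x\<bar> \<le> \<bar>f x\<bar> * \<bar>c\<bar>"
      using assms(3) by (intro mult_left_mono) force+
    then show "norm (f x * h x) \<le> norm (c * \<bar>f x\<bar>)" by (simp add: abs_mult mult.commute)
  qed
qed

lemma (in prob_space) cos_sin_moments_sq_le_weighted:
  fixes X :: "'a \<Rightarrow> real" and P :: "real \<Rightarrow> real"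
  assumes [measurable]: "X \<in> borel_measurable M" and iX: "integrable M X"
    and iX2: "integrable M (\<lambda>\<omega>. (X \<omega>)\<^sup>2)" and mean: "expectation X = 0"
    and [measurable]: "P \<in> borel_measurable borel" and P: "\<And>x. 0 \<le> P x" "\<And>x. P x \<le> c"
    and bound: "\<And>x y. A * t\<^sup>2 * (x - y)\<^sup>2 - t\<^sup>2 * (2 * x\<^sup>2 * P x + 2 * y\<^sup>2 * P y
      - 2 * x * y * (P x + P y)) \<le> 1 - cos (t * (x - y))"
  shows "(LINT \<omega>|M. cos (t * X \<omega>))\<^sup>2 + (LINT \<omega>|M. sin (t * X \<omega>))\<^sup>2
     \<le> 1 - 2 * A * t\<^sup>2 * expectation (\<lambda>\<omega>. (X \<omega>)\<^sup>2) + 4 * t\<^sup>2 * expectation (\<lambda>\<omega>. (X \<omega>)\<^sup>2 * P (X \<omega>))"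
proof -
  have P_abs: "\<bar>P x\<bar> \<le> c" for x using P[of x] by simp
  have iX2P: "integrable M (\<lambda>\<omega>. (X \<omega>)\<^sup>2 * P (X \<omega>))"
    using iX2 P_abs by (intro integrable_mult_bounded) auto
  have iXP: "integrable M (\<lambda>\<omega>. X \<omega> * P (X \<omega>))"
    using iX P_abs by (intro integrable_mult_bounded) auto
  have "(LINT \<omega>|M. cos (t * X \<omega>))\<^sup>2 + (LINT \<omega>|M. sin (t * X \<omega>))\<^sup>2
      \<le> 1 - 2 * expectation (\<lambda>\<omega>. A * t\<^sup>2 * (X \<omega>)\<^sup>2 - 2 * t\<^sup>2 * ((X \<omega>)\<^sup>2 * P (X \<omega>)))"
  proof (rule cos_sin_moments_sq_le[where g = "\<lambda>x. t\<^sup>2 * (2 * (x * P x) - A * x)"])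
    show "integrable M (\<lambda>\<omega>. A * t\<^sup>2 * (X \<omega>)\<^sup>2 - 2 * t\<^sup>2 * ((X \<omega>)\<^sup>2 * P (X \<omega>)))"
      using iX2 iX2P by simp
    show "integrable M (\<lambda>\<omega>. t\<^sup>2 * (2 * (X \<omega> * P (X \<omega>)) - A * X \<omega>))"
      using iX iXP by simp
    show "A * t\<^sup>2 * x\<^sup>2 - 2 * t\<^sup>2 * (x\<^sup>2 * P x) + (A * t\<^sup>2 * y\<^sup>2 - 2 * t\<^sup>2 * (y\<^sup>2 * P y))
        + x * (t\<^sup>2 * (2 * (y * P y) - A * y)) + t\<^sup>2 * (2 * (x * P x) - A * x) * y
        \<le> 1 - cos (t * (x - y))" for x y
      using bound[of x y] by (simp add: algebra_simps power2_eq_square)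
  qed fact+
  also have "\<dots> = 1 - 2 * A * t\<^sup>2 * expectation (\<lambda>\<omega>. (X \<omega>)\<^sup>2)
      + 4 * t\<^sup>2 * expectation (\<lambda>\<omega>. (X \<omega>)\<^sup>2 * P (X \<omega>))"
    using iX2 iX2P by simp
  finally show ?thesis .
qed

section \<open>Truncated fourth moments\<close>

lemma harmonic_le_two_sqrt: "(\<Sum>i=1..n. 1 / real i) \<le> 2 * sqrt (real n)"
proof (induction n)
  case (Suc n)
  have "sqrt (real n) \<le> sqrt (real n + 1)" by simp
  moreover have "sqrt (real n + 1) \<le> real n + 1" by (intro real_le_lsqrt) (auto simp: power2_eq_square)
  ultimately have sum_le: "sqrt (real n + 1) + sqrt (real n) \<le> 2 * (real n + 1)" by argo
  have sum_pos: "0 < sqrt (real n + 1) + sqrt (real n)"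
    by (intro add_pos_nonneg) auto
  have "(sqrt (real n + 1) - sqrt (real n)) * (sqrt (real n + 1) + sqrt (real n)) = 1"
    by (simp add: algebra_simps)
  then have diff: "sqrt (real n + 1) - sqrt (real n) = 1 / (sqrt (real n + 1) + sqrt (real n))"
    using sum_pos by (simp add: field_simps)
  have "1 / (real n + 1) = 2 / (2 * (real n + 1))" by (simp add: divide_simps)
  also have "\<dots> \<le> 2 / (sqrt (real n + 1) + sqrt (real n))"
    using sum_le sum_pos by (intro divide_left_mono) auto
  also have "\<dots> = 2 * (sqrt (real n + 1) - sqrt (real n))" unfolding diff by simp
  finally show ?case using Suc by (simp add: add.commute)
qed simp

lemma grid_error_le:
  fixes e L3 :: real and N :: nat
  assumes e: "0 < e" and L3: "0 \<le> L3" and N: "1 \<le> N"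
  shows "(e / real N)\<^sup>2 + (\<Sum>i\<in>{1..<N}. L3 * (e / real N) * (2 + 1 / real i))
    \<le> 2 * e * L3 + (e\<^sup>2 + 2 * e * L3) / sqrt (real N)"
proof -
  define h where "h = e / real N"
  have h: "0 < h" using e N by (simp add: h_def)
  have sum_le: "(\<Sum>i\<in>{1..<N}. L3 * h * (2 + 1 / real i)) \<le> L3 * h * (2 * real N + 2 * sqrt (real N))"
  proof -
    have "(\<Sum>i\<in>{1..<N}. 1 / real i) \<le> (\<Sum>i=1..N. 1 / real i)" by (intro sum_mono2) auto
    then have "(\<Sum>i\<in>{1..<N}. 2 + 1 / real i) \<le> 2 * real N + 2 * sqrt (real N)"
      using harmonic_le_two_sqrt[of N] N by (simp add: sum.distrib)
    then show ?thesis using L3 h by (simp add: sum_distrib_left[symmetric] mult_left_mono)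
  qed
  have sN: "1 \<le> sqrt (real N)" "sqrt (real N) \<le> real N"
    using N by (auto intro: real_le_lsqrt simp: power2_eq_square)
  have "sqrt (real N) \<le> real N * real N"
    using sN(2) le_square[of N] by (metis of_nat_le_iff of_nat_mult order.trans)
  then have "e\<^sup>2 / (real N)\<^sup>2 \<le> e\<^sup>2 / sqrt (real N)"
    using sN(1) by (intro divide_left_mono) (auto simp: power2_eq_square)
  then have "h\<^sup>2 \<le> e\<^sup>2 / sqrt (real N)" by (simp add: h_def power_divide)
  moreover have "L3 * h * (2 * real N + 2 * sqrt (real N)) = 2 * e * L3 + 2 * e * L3 / sqrt (real N)"
    using N sN by (simp add: h_def field_simps)
  ultimately show ?thesis using sum_le by (simp add: h_def[symmetric] add_divide_distrib)
qed

lemma min_sq_le_staircase: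
  fixes z :: "nat \<Rightarrow> real"
  assumes "z 0 = 0" "\<And>i. z i \<le> z (Suc i)" "\<And>i. 0 \<le> z i"
  shows "min (v\<^sup>2) ((z N)\<^sup>2) \<le> (\<Sum>i<N. ((z (Suc i))\<^sup>2 - (z i)\<^sup>2) * indicator {x. z i \<le> \<bar>x\<bar>} v)"
proof (induction N)
  case (Suc N)
  have zz: "(z N)\<^sup>2 \<le> (z (Suc N))\<^sup>2" using assms by (intro power_mono) auto
  show ?case
  proof (cases "z N \<le> \<bar>v\<bar>")
    case True
    then have "min (v\<^sup>2) ((z N)\<^sup>2) = (z N)\<^sup>2"
      using assms(3)[of N] abs_le_square_iff[of "z N" v] by simp
    then show ?thesis using Suc True zz by auto
  next
    case False
    then have "v\<^sup>2 \<le> (z N)\<^sup>2" using assms(3)[of N] abs_le_square_iff[of v "z N"] by simp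
    then show ?thesis using Suc False zz by auto
  qed
qed (simp add: assms)

lemma le_of_le_add_div_sqrt:
  fixes S a c :: real
  assumes "\<And>N. 1 \<le> N \<Longrightarrow> S \<le> a + c / sqrt (real N)"
  shows "S \<le> a"
proof (rule LIMSEQ_le_const)
  have "(\<lambda>N. c / sqrt (real N)) \<longlonglongrightarrow> 0"
    by (intro tendsto_divide_0[OF tendsto_const] filterlim_at_top_imp_at_infinity
        filterlim_compose[OF sqrt_at_top] filterlim_real_sequentially)
  from tendsto_add[OF tendsto_const this] show "(\<lambda>N. a + c / sqrt (real N)) \<longlonglongrightarrow> a"
    by simp
  show "\<exists>N. \<forall>n\<ge>N. S \<le> a + c / sqrt (real n)" using assms by blast
qed

lemma (in prob_space) sigma2z_nonneg: "0 \<le> sigma2z M X k z"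
  unfolding sigma2z_def by (intro integral_nonneg_AE) (auto simp: indicator_def)

lemma (in prob_space) sigma2z_0: "sigma2z M X k 0 = expectation (\<lambda>\<omega>. (X k \<omega>)\<^sup>2)"
  unfolding sigma2z_def by (simp add: indicator_def)

lemma integrable_sq_indicator:
  fixes Y :: "'a \<Rightarrow> real"
  assumes [measurable]: "Y \<in> borel_measurable M" and "integrable M (\<lambda>\<omega>. (Y \<omega>)\<^sup>2)"
  shows "integrable M (\<lambda>\<omega>. (Y \<omega>)\<^sup>2 * indicator {x. z \<le> \<bar>x\<bar>} (Y \<omega>))"
  using assms(2) by (intro integrable_mult_bounded[where c = 1]) (auto simp: indicator_def)

lemma (in prob_space) truncated_moment_le_staircase:
  fixes z :: "nat \<Rightarrow> real"
  assumes [measurable]: "X k \<in> borel_measurable M" and iX2: "integrable M (\<lambda>\<omega>. (X k \<omega>)\<^sup>2)"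
    and z: "z 0 = 0" "\<And>i. z i \<le> z (Suc i)" "\<And>i. 0 \<le> z i"
  shows "expectation (\<lambda>\<omega>. (X k \<omega>)\<^sup>2 * min ((X k \<omega>)\<^sup>2) ((z N)\<^sup>2))
    \<le> (\<Sum>i<N. ((z (Suc i))\<^sup>2 - (z i)\<^sup>2) * sigma2z M X k (z i))"
proof -
  note iI = integrable_sq_indicator[OF assms(1,2)]
  have "expectation (\<lambda>\<omega>. (X k \<omega>)\<^sup>2 * min ((X k \<omega>)\<^sup>2) ((z N)\<^sup>2))
      \<le> expectation (\<lambda>\<omega>. \<Sum>i<N. ((z (Suc i))\<^sup>2 - (z i)\<^sup>2)
           * ((X k \<omega>)\<^sup>2 * indicator {x. z i \<le> \<bar>x\<bar>} (X k \<omega>)))"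
  proof (rule integral_mono)
    show "integrable M (\<lambda>\<omega>. (X k \<omega>)\<^sup>2 * min ((X k \<omega>)\<^sup>2) ((z N)\<^sup>2))"
      using iX2 by (intro integrable_mult_bounded[where c = "(z N)\<^sup>2"]) auto
    show "integrable M (\<lambda>\<omega>. \<Sum>i<N. ((z (Suc i))\<^sup>2 - (z i)\<^sup>2)
        * ((X k \<omega>)\<^sup>2 * indicator {x. z i \<le> \<bar>x\<bar>} (X k \<omega>)))"
      using iI by auto
    fix \<omega>
    show "(X k \<omega>)\<^sup>2 * min ((X k \<omega>)\<^sup>2) ((z N)\<^sup>2) \<le> (\<Sum>i<N. ((z (Suc i))\<^sup>2 - (z i)\<^sup>2)
        * ((X k \<omega>)\<^sup>2 * indicator {x. z i \<le> \<bar>x\<bar>} (X k \<omega>)))"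
      using mult_left_mono[OF min_sq_le_staircase[OF z, of "X k \<omega>" N] zero_le_power2[of "X k \<omega>"]]
      by (simp add: sum_distrib_left mult.left_commute del: sum_mult_indicator)
  qed
  also have "\<dots> = (\<Sum>i<N. ((z (Suc i))\<^sup>2 - (z i)\<^sup>2) * sigma2z M X k (z i))"
    using iI by (simp add: sigma2z_def)
  finally show ?thesis .
qed

text \<open>Riemann sums for E[X^2 min(X^2, e^2)] = integral over (0, e) of 2 z sigma^2(z) dz on the
  grid z_i = i e / N.\<close>

lemma (in prob_space) sum_truncated_moments_le_grid:
  fixes X :: "nat \<Rightarrow> 'a \<Rightarrow> real" and I :: "nat set" and e L3 :: real and N :: nat
  assumes [measurable]: "\<And>k. k \<in> I \<Longrightarrow> X k \<in> borel_measurable M"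
    and iX2: "\<And>k. k \<in> I \<Longrightarrow> integrable M (\<lambda>\<omega>. (X k \<omega>)\<^sup>2)"
    and total: "(\<Sum>k\<in>I. expectation (\<lambda>\<omega>. (X k \<omega>)\<^sup>2)) = 1"
    and e: "0 < e" and L3: "0 \<le> L3"
    and tail: "\<And>z. 0 < z \<Longrightarrow> z \<le> e \<Longrightarrow> z * (\<Sum>k\<in>I. sigma2z M X k z) \<le> L3"
    and N: "1 \<le> N"
  shows "(\<Sum>k\<in>I. expectation (\<lambda>\<omega>. (X k \<omega>)\<^sup>2 * min ((X k \<omega>)\<^sup>2) (e\<^sup>2)))
    \<le> 2 * e * L3 + (e\<^sup>2 + 2 * e * L3) / sqrt (real N)"
proof -
  define h where "h = e / real N"
  define z where "z i = real i * h" for i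
  define L where "L x = (\<Sum>k\<in>I. sigma2z M X k x)" for x
  have h: "0 < h" using e N by (simp add: h_def)
  have z: "z 0 = 0" "\<And>i. z i \<le> z (Suc i)" "\<And>i. 0 \<le> z i"
    using h by (auto simp: z_def intro: mult_right_mono)
  have zN: "z N = e" using N by (simp add: z_def h_def)
  have c_eq: "(z (Suc i))\<^sup>2 - (z i)\<^sup>2 = (2 * real i + 1) * h\<^sup>2" for i
    by (simp add: z_def power2_eq_square algebra_simps)
  have "(\<Sum>k\<in>I. expectation (\<lambda>\<omega>. (X k \<omega>)\<^sup>2 * min ((X k \<omega>)\<^sup>2) (e\<^sup>2)))
      \<le> (\<Sum>k\<in>I. \<Sum>i<N. ((z (Suc i))\<^sup>2 - (z i)\<^sup>2) * sigma2z M X k (z i))"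
  proof (rule sum_mono)
    fix k assume "k \<in> I"
    then show "expectation (\<lambda>\<omega>. (X k \<omega>)\<^sup>2 * min ((X k \<omega>)\<^sup>2) (e\<^sup>2))
        \<le> (\<Sum>i<N. ((z (Suc i))\<^sup>2 - (z i)\<^sup>2) * sigma2z M X k (z i))"
      using truncated_moment_le_staircase[of X k z N] iX2 z unfolding zN by simp
  qed
  also have "\<dots> = (\<Sum>i<N. (2 * real i + 1) * h\<^sup>2 * L (z i))"
    unfolding c_eq L_def by (simp add: sum.swap[of _ I] sum_distrib_left)
  also have "\<dots> = h\<^sup>2 * L 0 + (\<Sum>i\<in>{1..<N}. (2 * real i + 1) * h\<^sup>2 * L (z i))"
    using N by (simp add: sum.atLeast_Suc_lessThan lessThan_atLeast0 z_def)
  also have "\<dots> \<le> h\<^sup>2 + (\<Sum>i\<in>{1..<N}. L3 * h * (2 + 1 / real i))"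
  proof (rule add_mono)
    show "h\<^sup>2 * L 0 \<le> h\<^sup>2" using total by (simp add: L_def sigma2z_0)
    show "(\<Sum>i\<in>{1..<N}. (2 * real i + 1) * h\<^sup>2 * L (z i)) \<le> (\<Sum>i\<in>{1..<N}. L3 * h * (2 + 1 / real i))"
    proof (rule sum_mono)
      fix i assume i: "i \<in> {1..<N}"
      then have "0 < z i" "z i \<le> e" using h N by (auto simp: z_def h_def field_simps)
      then have "z i * L (z i) \<le> L3" using tail unfolding L_def by blast
      then have "(2 * real i + 1) * h * (z i * L (z i)) \<le> (2 * real i + 1) * h * L3"
        using h by (intro mult_left_mono) auto
      then show "(2 * real i + 1) * h\<^sup>2 * L (z i) \<le> L3 * h * (2 + 1 / real i)"
        using i by (simp add: z_def field_simps power2_eq_square)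
    qed
  qed
  also have "\<dots> \<le> 2 * e * L3 + (e\<^sup>2 + 2 * e * L3) / sqrt (real N)"
    unfolding h_def using e L3 N by (rule grid_error_le)
  finally show ?thesis .
qed

lemma (in prob_space) sum_truncated_moments_le:
  fixes X :: "nat \<Rightarrow> 'a \<Rightarrow> real" and I :: "nat set" and e L3 :: real
  assumes "\<And>k. k \<in> I \<Longrightarrow> X k \<in> borel_measurable M"
    and "\<And>k. k \<in> I \<Longrightarrow> integrable M (\<lambda>\<omega>. (X k \<omega>)\<^sup>2)"
    and "(\<Sum>k\<in>I. expectation (\<lambda>\<omega>. (X k \<omega>)\<^sup>2)) = 1"
    and e: "0 < e" and tail: "\<And>z. 0 < z \<Longrightarrow> z \<le> e \<Longrightarrow> z * (\<Sum>k\<in>I. sigma2z M X k z) \<le> L3"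
  shows "(\<Sum>k\<in>I. expectation (\<lambda>\<omega>. (X k \<omega>)\<^sup>2 * min ((X k \<omega>)\<^sup>2) (e\<^sup>2))) \<le> 2 * e * L3"
proof (rule le_of_le_add_div_sqrt)
  have "0 \<le> e * (\<Sum>k\<in>I. sigma2z M X k e)" using e by (simp add: sum_nonneg sigma2z_nonneg)
  then have "0 \<le> L3" using tail[of e] e by linarith
  then show "(\<Sum>k\<in>I. expectation (\<lambda>\<omega>. (X k \<omega>)\<^sup>2 * min ((X k \<omega>)\<^sup>2) (e\<^sup>2)))
      \<le> 2 * e * L3 + (e\<^sup>2 + 2 * e * L3) / sqrt (real N)" if "1 \<le> N" for N
    using sum_truncated_moments_le_grid[OF assms(1-4) _ tail that] by blast
qed

section \<open>The characteristic function of the sum\<close>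

lemma (in prob_space) cmod_fchar_sq:
  assumes [measurable]: "X k \<in> borel_measurable M"
  shows "(cmod (fchar M X k t))\<^sup>2
    = (LINT \<omega>|M. cos (t * X k \<omega>))\<^sup>2 + (LINT \<omega>|M. sin (t * X k \<omega>))\<^sup>2"
proof -
  have i: "integrable M (\<lambda>\<omega>. iexp (t * X k \<omega>))"
    by (rule integrable_const_bound[where B = 1]) auto
  have "fchar M X k t = (CLINT \<omega>|M. iexp (t * X k \<omega>))"
    unfolding fchar_def char_def by (subst integral_distr) auto
  moreover have "Re (CLINT \<omega>|M. iexp (t * X k \<omega>)) = (LINT \<omega>|M. cos (t * X k \<omega>))"
    using integral_Re[OF i] by (simp add: Re_exp)
  moreover have "Im (CLINT \<omega>|M. iexp (t * X k \<omega>)) = (LINT \<omega>|M. sin (t * X k \<omega>))"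
    using integral_Im[OF i] by (simp add: Im_exp)
  ultimately show ?thesis by (simp add: cmod_power2)
qed

lemma (in prob_space) cmod_fbar_le_1:
  assumes "\<And>k. k \<in> {1..n} \<Longrightarrow> X k \<in> borel_measurable M"
  shows "cmod (fbar M X n t) \<le> 1"
proof -
  have "cmod (fchar M X k t) \<le> 1" if "k \<in> {1..n}" for k
    unfolding fchar_def using assms[OF that] by (intro real_distribution.cmod_char_le_1) auto
  then show ?thesis unfolding fbar_def prod_norm[symmetric]
    by (intro prod_le_1) auto
qed

lemma cmod_prod_le_exp:
  fixes f :: "'i \<Rightarrow> complex" and a :: "'i \<Rightarrow> real"
  assumes "finite I" and "\<And>k. k \<in> I \<Longrightarrow> (cmod (f k))\<^sup>2 \<le> 1 - a k"
  shows "cmod (\<Prod>k\<in>I. f k) \<le> exp (- (\<Sum>k\<in>I. a k) / 2)"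
proof (rule power2_le_imp_le)
  have "(cmod (\<Prod>k\<in>I. f k))\<^sup>2 = (\<Prod>k\<in>I. (cmod (f k))\<^sup>2)"
    by (simp add: prod_norm[symmetric] prod_power_distrib)
  also have "\<dots> \<le> (\<Prod>k\<in>I. exp (- a k))"
    using assms order.trans[OF _ exp_ge_add_one_self] by (intro prod_mono) fastforce
  also have "\<dots> = (exp (- (\<Sum>k\<in>I. a k) / 2))\<^sup>2"
    using assms(1) by (simp add: exp_sum[symmetric] sum_negf power2_eq_square exp_add[symmetric])
  finally show "(cmod (\<Prod>k\<in>I. f k))\<^sup>2 \<le> (exp (- (\<Sum>k\<in>I. a k) / 2))\<^sup>2" .
qed simp

lemma (in prob_space) trunc_weight_moment_eq:
  assumes [measurable]: "X k \<in> borel_measurable M" and iX2: "integrable M (\<lambda>\<omega>. (X k \<omega>)\<^sup>2)"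
    and "0 \<le> e"
  shows "expectation (\<lambda>\<omega>. (X k \<omega>)\<^sup>2 * trunc_weight A B t e (X k \<omega>))
    = 4 * B * t\<^sup>2 * expectation (\<lambda>\<omega>. (X k \<omega>)\<^sup>2 * min ((X k \<omega>)\<^sup>2) (e\<^sup>2))
      + (A - 4 * B * t\<^sup>2 * e\<^sup>2) * sigma2z M X k e"
proof -
  have "(X k \<omega>)\<^sup>2 * trunc_weight A B t e (X k \<omega>)
      = 4 * B * t\<^sup>2 * ((X k \<omega>)\<^sup>2 * min ((X k \<omega>)\<^sup>2) (e\<^sup>2))
        + (A - 4 * B * t\<^sup>2 * e\<^sup>2) * ((X k \<omega>)\<^sup>2 * indicator {x. e \<le> \<bar>x\<bar>} (X k \<omega>))" for \<omega>
  proof (cases "\<bar>X k \<omega>\<bar> < e")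
    case True
    then have "(X k \<omega>)\<^sup>2 \<le> e\<^sup>2" by (simp add: abs_le_square_iff[symmetric])
    then show ?thesis using True by (simp add: trunc_weight_def algebra_simps power2_eq_square)
  next
    case False
    then have "e\<^sup>2 \<le> (X k \<omega>)\<^sup>2" using \<open>0 \<le> e\<close> by (simp add: abs_le_square_iff[symmetric])
    then show ?thesis using False by (simp add: trunc_weight_def algebra_simps power2_eq_square)
  qed
  moreover have "integrable M (\<lambda>\<omega>. (X k \<omega>)\<^sup>2 * min ((X k \<omega>)\<^sup>2) (e\<^sup>2))"
    using iX2 by (intro integrable_mult_bounded[where c = "e\<^sup>2"]) auto
  ultimately show ?thesis
    using integrable_sq_indicator[OF assms(1,2)] by (simp add: sigma2z_def)
qed

lemma (in prob_space) sum_trunc_weight_moments_le: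
  fixes X :: "nat \<Rightarrow> 'a \<Rightarrow> real" and A B t e L3 :: real
  assumes Xm [measurable]: "\<And>k. k \<in> {1..n} \<Longrightarrow> X k \<in> borel_measurable M"
    and iX2: "\<And>k. k \<in> {1..n} \<Longrightarrow> integrable M (\<lambda>\<omega>. (X k \<omega>)\<^sup>2)"
    and total: "(\<Sum>k\<in>{1..n}. LINT \<omega>|M. (X k \<omega>)\<^sup>2) = 1"
    and e: "0 < e" and B: "0 \<le> B" and cap: "4 * B * t\<^sup>2 * e\<^sup>2 \<le> A"
    and tail: "\<And>z. 0 < z \<Longrightarrow> z \<le> e \<Longrightarrow> z * Ln M X n z \<le> L3"
  shows "(\<Sum>k\<in>{1..n}. expectation (\<lambda>\<omega>. (X k \<omega>)\<^sup>2 * trunc_weight A B t e (X k \<omega>)))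
    \<le> L3 * (A / e + 4 * B * t\<^sup>2 * e)"
proof -
  have "(\<Sum>k\<in>{1..n}. expectation (\<lambda>\<omega>. (X k \<omega>)\<^sup>2 * trunc_weight A B t e (X k \<omega>)))
    = (\<Sum>k\<in>{1..n}. 4 * B * t\<^sup>2 * expectation (\<lambda>\<omega>. (X k \<omega>)\<^sup>2 * min ((X k \<omega>)\<^sup>2) (e\<^sup>2))
      + (A - 4 * B * t\<^sup>2 * e\<^sup>2) * sigma2z M X k e)"
    using trunc_weight_moment_eq[of X, OF Xm iX2] e by (intro sum.cong) auto
  also have "\<dots> = 4 * B * t\<^sup>2
        * (\<Sum>k\<in>{1..n}. expectation (\<lambda>\<omega>. (X k \<omega>)\<^sup>2 * min ((X k \<omega>)\<^sup>2) (e\<^sup>2)))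
      + (A - 4 * B * t\<^sup>2 * e\<^sup>2) * Ln M X n e"
    by (simp add: Ln_def sum.distrib sum_distrib_left)
  also have "\<dots> \<le> 4 * B * t\<^sup>2 * (2 * e * L3) + (A - 4 * B * t\<^sup>2 * e\<^sup>2) * (L3 / e)"
  proof (intro add_mono mult_left_mono)
    show "(\<Sum>k\<in>{1..n}. expectation (\<lambda>\<omega>. (X k \<omega>)\<^sup>2 * min ((X k \<omega>)\<^sup>2) (e\<^sup>2))) \<le> 2 * e * L3"
      by (intro sum_truncated_moments_le[OF Xm iX2 total e]) (use tail in \<open>auto simp: Ln_def\<close>)
    show "Ln M X n e \<le> L3 / e" using tail[of e] e by (simp add: le_divide_eq mult.commute)
  qed (use B cap in auto)
  also have "\<dots> = L3 * (A / e + 4 * B * t\<^sup>2 * e)"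
    using e by (simp add: field_simps power2_eq_square)
  finally show ?thesis .
qed

lemma (in prob_space) cmod_fbar_le_exp_afun:
  fixes X :: "nat \<Rightarrow> 'a \<Rightarrow> real" and \<theta> t e L3 :: real
  assumes Xm [measurable]: "\<And>k. k \<in> {1..n} \<Longrightarrow> X k \<in> borel_measurable M"
    and iX: "\<And>k. k \<in> {1..n} \<Longrightarrow> integrable M (X k)"
    and iX2: "\<And>k. k \<in> {1..n} \<Longrightarrow> integrable M (\<lambda>\<omega>. (X k \<omega>)\<^sup>2)"
    and mean: "\<And>k. k \<in> {1..n} \<Longrightarrow> (LINT \<omega>|M. X k \<omega>) = 0"
    and total: "(\<Sum>k\<in>{1..n}. LINT \<omega>|M. (X k \<omega>)\<^sup>2) = 1"
    and \<theta>: "0 < \<theta>" "\<theta> < 2 * pi" and e: "0 < e" and et: "2 * e * \<bar>t\<bar> \<le> sqrt (afun \<theta> / bfun \<theta>)"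
    and tail: "\<And>z. 0 < z \<Longrightarrow> z \<le> e \<Longrightarrow> z * Ln M X n z \<le> L3"
  shows "cmod (fbar M X n t)
    \<le> exp (- (afun \<theta> - 2 * L3 / e * (afun \<theta> + 4 * bfun \<theta> * t\<^sup>2 * e\<^sup>2)) * t\<^sup>2)"
proof -
  define A where "A = afun \<theta>"
  define B where "B = bfun \<theta>"
  define P where "P = trunc_weight A B t e"
  define V where "V k = expectation (\<lambda>\<omega>. (X k \<omega>)\<^sup>2 * P (X k \<omega>))" for k
  have B: "0 < B" using bfun_pos \<theta> by (auto simp: B_def)
  have cap: "4 * B * t\<^sup>2 * e\<^sup>2 \<le> A"
    using et B e by (intro sq_le_of_le_sqrt_div) (auto simp: A_def B_def)
  have factor: "(cmod (fchar M X k t))\<^sup>2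
      \<le> 1 - (2 * A * t\<^sup>2 * expectation (\<lambda>\<omega>. (X k \<omega>)\<^sup>2) - 4 * t\<^sup>2 * V k)"
    if k: "k \<in> {1..n}" for k
  proof -
    have "(LINT \<omega>|M. cos (t * X k \<omega>))\<^sup>2 + (LINT \<omega>|M. sin (t * X k \<omega>))\<^sup>2
        \<le> 1 - 2 * A * t\<^sup>2 * expectation (\<lambda>\<omega>. (X k \<omega>)\<^sup>2) + 4 * t\<^sup>2 * V k"
      unfolding V_def P_def
    proof (rule cos_sin_moments_sq_le_weighted[OF Xm iX iX2 mean, OF k k k k])
      show "0 \<le> trunc_weight A B t e x" "trunc_weight A B t e x \<le> A" for x
        using trunc_weight_bounded[OF _ cap] B by auto
      show "A * t\<^sup>2 * (x - y)\<^sup>2 - t\<^sup>2 * (2 * x\<^sup>2 * trunc_weight A B t e x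
          + 2 * y\<^sup>2 * trunc_weight A B t e y - 2 * x * y * (trunc_weight A B t e x
          + trunc_weight A B t e y)) \<le> 1 - cos (t * (x - y))" for x y
        using B e et quartic_le_one_minus_cos_abs[OF \<theta>]
        by (intro one_minus_cos_ge_trunc_weight) (auto simp: A_def B_def)
    qed simp
    then show ?thesis using cmod_fchar_sq[of X k, OF Xm[OF k]] by simp
  qed
  have sum_V: "(\<Sum>k\<in>{1..n}. V k) \<le> L3 * (A / e + 4 * B * t\<^sup>2 * e)"
    unfolding V_def P_def using B by (intro sum_trunc_weight_moments_le[OF Xm iX2 total e _ cap tail]) auto
  have "cmod (fbar M X n t) \<le> exp (- (\<Sum>k\<in>{1..n}.
      2 * A * t\<^sup>2 * expectation (\<lambda>\<omega>. (X k \<omega>)\<^sup>2) - 4 * t\<^sup>2 * V k) / 2)"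
    unfolding fbar_def using factor by (intro cmod_prod_le_exp) auto
  also have "\<dots> \<le> exp (- (A - 2 * L3 / e * (A + 4 * B * t\<^sup>2 * e\<^sup>2)) * t\<^sup>2)"
    unfolding exp_le_cancel_iff
  proof -
    have "(\<Sum>k\<in>{1..n}. 2 * A * t\<^sup>2 * expectation (\<lambda>\<omega>. (X k \<omega>)\<^sup>2) - 4 * t\<^sup>2 * V k)
        = 2 * A * t\<^sup>2 - 4 * t\<^sup>2 * (\<Sum>k\<in>{1..n}. V k)"
      using total by (simp add: sum_subtractf sum_distrib_left[symmetric])
    moreover have "4 * t\<^sup>2 * (\<Sum>k\<in>{1..n}. V k) \<le> 4 * t\<^sup>2 * (L3 * (A / e + 4 * B * t\<^sup>2 * e))"
      using sum_V by (intro mult_left_mono) auto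
    moreover have "2 * A * t\<^sup>2 - 4 * t\<^sup>2 * (L3 * (A / e + 4 * B * t\<^sup>2 * e))
        = 2 * ((A - 2 * L3 / e * (A + 4 * B * t\<^sup>2 * e\<^sup>2)) * t\<^sup>2)"
      using e by (simp add: field_simps power2_eq_square)
    ultimately show "- (\<Sum>k\<in>{1..n}. 2 * A * t\<^sup>2 * expectation (\<lambda>\<omega>. (X k \<omega>)\<^sup>2) - 4 * t\<^sup>2 * V k) / 2
        \<le> - (A - 2 * L3 / e * (A + 4 * B * t\<^sup>2 * e\<^sup>2)) * t\<^sup>2"
      by argo
  qed
  finally show ?thesis by (simp add: A_def B_def)
qed

section \<open>The exponents k(\<tau>, u) and k(\<tau>)\<close>

text \<open>If T is empty the supremum is -\<infinity>, which real_of_ereal sends to 0.\<close>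

lemma le_exp_neg_SUP:
  fixes g :: "'b \<Rightarrow> real" and y s :: real
  assumes bound: "\<And>\<theta>. \<theta> \<in> T \<Longrightarrow> y \<le> exp (- g \<theta> * s)" and s: "0 < s" and y: "0 \<le> y" "y \<le> 1"
  shows "y \<le> exp (- real_of_ereal (SUP \<theta>\<in>T. ereal (g \<theta>)) * s)"
proof (cases "y = 0")
  case False
  then have y_pos: "0 < y" using y by simp
  define c where "c = - ln y / s"
  have cs: "c * s = - ln y" using s by (simp add: c_def)
  have "g \<theta> \<le> c" if "\<theta> \<in> T" for \<theta>
  proof -
    have "ln y \<le> - g \<theta> * s" using bound[OF that] y_pos ln_le_cancel_iff[of y "exp (- g \<theta> * s)"] by simp
    then have "g \<theta> * s \<le> c * s" using cs by linarith
    then show ?thesis using s by (rule mult_right_le_imp_le)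
  qed
  then have sup_le: "(SUP \<theta>\<in>T. ereal (g \<theta>)) \<le> ereal c"
    by (intro SUP_least) auto
  show ?thesis
  proof (cases "(SUP \<theta>\<in>T. ereal (g \<theta>))")
    case (real r)
    then have "r \<le> c" using sup_le by simp
    then have "r * s \<le> - ln y" using s cs mult_right_mono[of r c s] by linarith
    then have "exp (ln y) \<le> exp (- r * s)" by simp
    then show ?thesis using real y_pos by simp
  qed (use sup_le y in auto)
qed simp

lemma k1_pos_iff:
  assumes "0 \<le> \<tau>" shows "0 < k1 \<tau> \<longleftrightarrow> \<tau> < pi / 4"
proof
  assume "0 < k1 \<tau>"
  show "\<tau> < pi / 4"
  proof (rule ccontr)
    assume "\<not> \<tau> < pi / 4"
    have "k1 \<tau> \<le> 0" unfolding k1_def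
    proof (rule SUP_least)
      fix \<theta> assume \<theta>: "\<theta> \<in> {0<..2 * pi}"
      show "ereal (afun \<theta> - 8 * \<tau> * sqrt (afun \<theta> * bfun \<theta>)) \<le> 0"
      proof (cases "\<theta> = 2 * pi")
        case False
        then have \<theta>': "0 < \<theta>" "\<theta> < 2 * pi" using \<theta> by auto
        define r where "r = sqrt (afun \<theta> / bfun \<theta>)"
        have "bfun \<theta> * r * r \<le> bfun \<theta> * r * (8 * \<tau>)"
          using afun_pos[OF \<theta>'] bfun_pos[OF \<theta>'] sqrt_afun_div_bfun_le[OF \<theta>'] \<open>\<not> \<tau> < pi / 4\<close>
          by (intro mult_left_mono) (auto simp: r_def)
        then show ?thesis using sqrt_afun_mult_bfun[OF \<theta>', folded r_def]
          by (simp add: power2_eq_square algebra_simps)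
      qed (simp add: afun_2pi bfun_2pi)
    qed
    then show False using \<open>0 < k1 \<tau>\<close> by simp
  qed
next
  assume "\<tau> < pi / 4"
  define \<theta> where "\<theta> = 4 * \<tau> + pi"
  have \<theta>: "0 < \<theta>" "\<theta> < 2 * pi" "8 * \<tau> < \<theta>" using \<open>\<tau> < pi / 4\<close> assms by (auto simp: \<theta>_def)
  define r where "r = sqrt (afun \<theta> / bfun \<theta>)"
  have "bfun \<theta> * r * (8 * \<tau>) < bfun \<theta> * r * r"
    using afun_pos[OF \<theta>(1,2)] bfun_pos[OF \<theta>(1,2)] sqrt_afun_div_bfun_gt[OF \<theta>(1,2)] \<theta> assms
    by (intro mult_strict_left_mono) (auto simp: r_def)
  then have "0 < afun \<theta> - 8 * \<tau> * sqrt (afun \<theta> * bfun \<theta>)"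
    using sqrt_afun_mult_bfun[OF \<theta>(1,2), folded r_def] by (simp add: power2_eq_square algebra_simps)
  moreover have "ereal (afun \<theta> - 8 * \<tau> * sqrt (afun \<theta> * bfun \<theta>)) \<le> k1 \<tau>"
    unfolding k1_def using \<theta> by (intro SUP_upper) auto
  ultimately show "0 < k1 \<tau>" by (meson ereal_less(2) order_less_le_trans)
qed

lemma tau1_le_lt_iff:
  assumes "0 < L0" "0 < eps"
  shows "(\<exists>\<tau>::real. tau1 L0 eps \<le> ereal \<tau> \<and> \<tau> < pi / 4) \<longleftrightarrow> ereal L0 < cbrt_quarter eps"
proof (cases eps)
  case (real \<epsilon>)
  then have \<epsilon>: "0 < \<epsilon>" using assms by simp
  have "(\<exists>\<tau>::real. pi * L0 ^ 3 / \<epsilon> \<le> \<tau> \<and> \<tau> < pi / 4) \<longleftrightarrow> pi * L0 ^ 3 / \<epsilon> < pi / 4"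
  proof
    assume "\<exists>\<tau>::real. pi * L0 ^ 3 / \<epsilon> \<le> \<tau> \<and> \<tau> < pi / 4"
    then obtain \<tau> where "pi * L0 ^ 3 / \<epsilon> \<le> \<tau>" "\<tau> < pi / 4" by blast
    then show "pi * L0 ^ 3 / \<epsilon> < pi / 4" by linarith
  qed auto
  also have "\<dots> \<longleftrightarrow> L0 ^ 3 < \<epsilon> / 4" using \<epsilon> by (simp add: field_simps)
  also have "\<dots> \<longleftrightarrow> L0 < root 3 (\<epsilon> / 4)"
    using real_root_less_iff[of 3 "L0 ^ 3" "\<epsilon> / 4"] assms by (simp add: real_root_power_cancel)
  finally show ?thesis using \<epsilon> by (simp add: real tau1_def cbrt_quarter_def)
qed (use assms in \<open>auto simp: tau1_def cbrt_quarter_def intro!: exI[of _ 0]\<close>)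

lemma min_scale_bounds:
  fixes eps :: ereal and t r :: real
  assumes "0 < eps" "t \<noteq> 0" "0 < r"
  defines "\<delta> \<equiv> real_of_ereal (min (2 * eps * ereal \<bar>t\<bar>) (ereal r))"
  shows "0 < \<delta>" "\<delta> \<le> r" "ereal (\<delta> / (2 * \<bar>t\<bar>)) \<le> eps"
    and "\<delta> = r \<or> (\<exists>\<epsilon>. eps = ereal \<epsilon> \<and> \<delta> = 2 * \<epsilon> * \<bar>t\<bar>)"
proof -
  have t: "0 < \<bar>t\<bar>" using assms(2) by simp
  have "0 < \<delta> \<and> \<delta> \<le> r \<and> ereal (\<delta> / (2 * \<bar>t\<bar>)) \<le> eps
      \<and> (\<delta> = r \<or> (\<exists>\<epsilon>. eps = ereal \<epsilon> \<and> \<delta> = 2 * \<epsilon> * \<bar>t\<bar>))"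
  proof (cases eps)
    case (real \<epsilon>)
    have \<delta>: "\<delta> = min (2 * \<epsilon> * \<bar>t\<bar>) r" unfolding \<delta>_def real by (simp add: min_def)
    have "\<delta> / (2 * \<bar>t\<bar>) \<le> \<epsilon>" unfolding \<delta> using t by (simp add: divide_le_eq)
    then show ?thesis using assms t real by (auto simp: \<delta> min_def)
  next
    case PInf
    then have "\<delta> = r" using t by (simp add: \<delta>_def ereal_mult_infty)
    then show ?thesis using assms PInf by simp
  qed (use assms in simp)
  then show "0 < \<delta>" "\<delta> \<le> r" "ereal (\<delta> / (2 * \<bar>t\<bar>)) \<le> eps"
    "\<delta> = r \<or> (\<exists>\<epsilon>. eps = ereal \<epsilon> \<and> \<delta> = 2 * \<epsilon> * \<bar>t\<bar>)" by auto
qed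

lemma (in prob_space) cmod_fbar_le_exp_min_scale:
  fixes X :: "nat \<Rightarrow> 'a \<Rightarrow> real" and \<theta> t L3 :: real and eps :: ereal
  assumes X: "\<And>k. k \<in> {1..n} \<Longrightarrow> X k \<in> borel_measurable M"
    "\<And>k. k \<in> {1..n} \<Longrightarrow> integrable M (X k)"
    "\<And>k. k \<in> {1..n} \<Longrightarrow> integrable M (\<lambda>\<omega>. (X k \<omega>)\<^sup>2)"
    "\<And>k. k \<in> {1..n} \<Longrightarrow> (LINT \<omega>|M. X k \<omega>) = 0"
    "(\<Sum>k\<in>{1..n}. LINT \<omega>|M. (X k \<omega>)\<^sup>2) = 1"
    and eps: "0 < eps" and tail: "\<And>z. 0 < z \<Longrightarrow> ereal z \<le> eps \<Longrightarrow> z * Ln M X n z \<le> L3"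
    and \<theta>: "0 < \<theta>" "\<theta> < 2 * pi" and t: "t \<noteq> 0"
  defines "\<delta> \<equiv> real_of_ereal (min (2 * eps * ereal \<bar>t\<bar>) (ereal (sqrt (afun \<theta> / bfun \<theta>))))"
  shows "cmod (fbar M X n t)
    \<le> exp (- (afun \<theta> - 4 * (L3 * \<bar>t\<bar>) / \<delta> * (afun \<theta> + bfun \<theta> * \<delta>\<^sup>2)) * t\<^sup>2)"
proof -
  have "0 < sqrt (afun \<theta> / bfun \<theta>)" using afun_pos[OF \<theta>] bfun_pos[OF \<theta>] by simp
  note \<delta> = min_scale_bounds[OF eps t this, folded \<delta>_def]
  define e where "e = \<delta> / (2 * \<bar>t\<bar>)"
  have e: "0 < e" "2 * e * \<bar>t\<bar> \<le> sqrt (afun \<theta> / bfun \<theta>)"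
    using \<delta>(1,2) t by (simp_all add: e_def)
  have tail_e: "z * Ln M X n z \<le> L3" if "0 < z" "z \<le> e" for z
  proof -
    have "ereal z \<le> ereal (\<delta> / (2 * \<bar>t\<bar>))" using that(2) by (simp add: e_def)
    then have "ereal z \<le> eps" using \<delta>(3) by (rule order.trans)
    then show ?thesis using tail that by blast
  qed
  have "cmod (fbar M X n t)
      \<le> exp (- (afun \<theta> - 2 * L3 / e * (afun \<theta> + 4 * bfun \<theta> * t\<^sup>2 * e\<^sup>2)) * t\<^sup>2)"
    by (rule cmod_fbar_le_exp_afun[OF X \<theta> e tail_e])
  also have "2 * L3 / e * (afun \<theta> + 4 * bfun \<theta> * t\<^sup>2 * e\<^sup>2)
      = 4 * (L3 * \<bar>t\<bar>) / \<delta> * (afun \<theta> + bfun \<theta> * \<delta>\<^sup>2)"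
  proof -
    have "2 * \<bar>t\<bar> * e = \<delta>" using t by (simp add: e_def)
    then have "4 * t\<^sup>2 * e\<^sup>2 = \<delta>\<^sup>2" by (auto simp: power_mult_distrib)
    moreover have "2 * L3 / e = 4 * (L3 * \<bar>t\<bar>) / \<delta>" using t by (simp add: e_def)
    ultimately show ?thesis by (simp add: mult.assoc)
  qed
  finally show ?thesis .
qed

lemma (in prob_space) cmod_fbar_le_exp_k2:
  fixes X :: "nat \<Rightarrow> 'a \<Rightarrow> real" and L3 :: real and eps :: ereal
  assumes X: "\<And>k. k \<in> {1..n} \<Longrightarrow> X k \<in> borel_measurable M"
    "\<And>k. k \<in> {1..n} \<Longrightarrow> integrable M (X k)"
    "\<And>k. k \<in> {1..n} \<Longrightarrow> integrable M (\<lambda>\<omega>. (X k \<omega>)\<^sup>2)"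
    "\<And>k. k \<in> {1..n} \<Longrightarrow> (LINT \<omega>|M. X k \<omega>) = 0"
    "(\<Sum>k\<in>{1..n}. LINT \<omega>|M. (X k \<omega>)\<^sup>2) = 1"
    and eps: "0 < eps" and tail: "\<And>z. 0 < z \<Longrightarrow> ereal z \<le> eps \<Longrightarrow> z * Ln M X n z \<le> L3"
  shows "cmod (fbar M X n t) \<le> exp (- real_of_ereal (k2 (L3 * \<bar>t\<bar>) (2 * eps * ereal \<bar>t\<bar>)) * t\<^sup>2)"
proof (cases "t = 0")
  case True
  then show ?thesis using cmod_fbar_le_1[OF X(1)] by simp
next
  case False
  define \<delta> where "\<delta> \<theta> = real_of_ereal (min (2 * eps * ereal \<bar>t\<bar>) (ereal (sqrt (afun \<theta> / bfun \<theta>))))"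
    for \<theta>
  have "k2 (L3 * \<bar>t\<bar>) (2 * eps * ereal \<bar>t\<bar>) = (SUP \<theta>\<in>{0<..<2 * pi}.
      ereal (afun \<theta> - 4 * (L3 * \<bar>t\<bar>) / \<delta> \<theta> * (afun \<theta> + bfun \<theta> * (\<delta> \<theta>)\<^sup>2)))"
    unfolding k2_def
  proof (rule SUP_cong[OF refl])
    fix \<theta> assume "\<theta> \<in> {0<..<2 * pi}"
    then have "0 < sqrt (afun \<theta> / bfun \<theta>)" using afun_pos bfun_pos by simp
    then have "0 < \<delta> \<theta>" unfolding \<delta>_def using min_scale_bounds(1)[OF eps False] by blast
    then show "k3 (L3 * \<bar>t\<bar>) (real_of_ereal (min (2 * eps * ereal \<bar>t\<bar>)
        (ereal (sqrt (afun \<theta> / bfun \<theta>))))) \<theta>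
      = ereal (afun \<theta> - 4 * (L3 * \<bar>t\<bar>) / \<delta> \<theta> * (afun \<theta> + bfun \<theta> * (\<delta> \<theta>)\<^sup>2))"
      unfolding k3_def \<delta>_def[symmetric] by simp
  qed
  moreover have "cmod (fbar M X n t) \<le> exp (- real_of_ereal (SUP \<theta>\<in>{0<..<2 * pi}.
      ereal (afun \<theta> - 4 * (L3 * \<bar>t\<bar>) / \<delta> \<theta> * (afun \<theta> + bfun \<theta> * (\<delta> \<theta>)\<^sup>2))) * t\<^sup>2)"
    using cmod_fbar_le_exp_min_scale[OF X eps tail _ _ False] cmod_fbar_le_1[OF X(1)] False
    by (intro le_exp_neg_SUP) (auto simp: \<delta>_def)
  ultimately show ?thesis by simp
qed

text \<open>The comparison of the k(\<tau>, u, \<theta>) exponent with the k(\<tau>) exponent, in the notation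
  b = bfun \<theta>, r = sqrt (afun \<theta> / bfun \<theta>), s = L^3 |t| and \<delta> = min (2 \<epsilon> |t|) r.\<close>

lemma scaled_quartic_term_le:
  fixes b r \<delta> s \<tau> :: real
  assumes "0 < b" "0 < \<delta>" "\<delta> \<le> r" "r \<le> 2 * pi" "0 \<le> s" "s \<le> \<tau>"
    and "\<delta> = r \<or> 2 * pi * s \<le> \<tau> * \<delta>"
  shows "4 * s / \<delta> * (b * r\<^sup>2 + b * \<delta>\<^sup>2) \<le> 8 * \<tau> * (b * r)"
proof -
  have split: "4 * s / \<delta> * (b * r\<^sup>2 + b * \<delta>\<^sup>2) = 4 * b * r\<^sup>2 * (s / \<delta>) + 4 * (s * (b * \<delta>))"
    using assms(2) by (simp add: field_simps power2_eq_square)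
  from assms(7) show ?thesis
  proof
    assume "\<delta> = r"
    then show ?thesis using assms by (simp add: split power2_eq_square mult_right_mono)
  next
    assume "2 * pi * s \<le> \<tau> * \<delta>"
    then have "s / \<delta> \<le> \<tau> / (2 * pi)" using assms(2) by (simp add: field_simps)
    then have "4 * b * r\<^sup>2 * (s / \<delta>) \<le> 4 * b * r\<^sup>2 * (\<tau> / (2 * pi))"
      using assms(1) by (intro mult_left_mono) auto
    also have "\<dots> = 2 * \<tau> * (b * r) * (r / pi)" by (simp add: field_simps power2_eq_square)
    also have "\<dots> \<le> 2 * \<tau> * (b * r) * 2"
      using assms by (intro mult_left_mono) (auto simp: divide_le_eq)
    finally have "4 * b * r\<^sup>2 * (s / \<delta>) \<le> 4 * \<tau> * (b * r)" by simp
    moreover have "s * (b * \<delta>) \<le> \<tau> * (b * r)"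
      using assms by (intro mult_mono mult_left_mono) auto
    ultimately show ?thesis unfolding split by simp
  qed
qed

lemma (in prob_space) cmod_fbar_le_exp_k1:
  fixes X :: "nat \<Rightarrow> 'a \<Rightarrow> real" and L3 L0 \<tau> :: real and eps :: ereal
  assumes X: "\<And>k. k \<in> {1..n} \<Longrightarrow> X k \<in> borel_measurable M"
    "\<And>k. k \<in> {1..n} \<Longrightarrow> integrable M (X k)"
    "\<And>k. k \<in> {1..n} \<Longrightarrow> integrable M (\<lambda>\<omega>. (X k \<omega>)\<^sup>2)"
    "\<And>k. k \<in> {1..n} \<Longrightarrow> (LINT \<omega>|M. X k \<omega>) = 0"
    "(\<Sum>k\<in>{1..n}. LINT \<omega>|M. (X k \<omega>)\<^sup>2) = 1"
    and eps: "0 < eps" and tail: "\<And>z. 0 < z \<Longrightarrow> ereal z \<le> eps \<Longrightarrow> z * Ln M X n z \<le> L3"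
    and L3: "0 < L3" "L3 \<le> L0 ^ 3" and \<tau>: "tau1 L0 eps \<le> ereal \<tau>" and t: "\<bar>t\<bar> \<le> \<tau> / L3"
  shows "cmod (fbar M X n t) \<le> exp (- real_of_ereal (k1 \<tau>) * t\<^sup>2)"
proof (cases "t = 0")
  case True
  then show ?thesis using cmod_fbar_le_1[OF X(1)] by simp
next
  case False
  have s: "0 \<le> L3 * \<bar>t\<bar>" "L3 * \<bar>t\<bar> \<le> \<tau>" using t L3 by (simp_all add: le_divide_eq mult.commute)
  show ?thesis unfolding k1_def
  proof (rule le_exp_neg_SUP)
    fix \<theta> assume "\<theta> \<in> {0<..2 * pi}"
    then consider "\<theta> = 2 * pi" | "0 < \<theta>" "\<theta> < 2 * pi" by fastforce
    then show "cmod (fbar M X n t) \<le> exp (- (afun \<theta> - 8 * \<tau> * sqrt (afun \<theta> * bfun \<theta>)) * t\<^sup>2)"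
    proof cases
      case 1
      then show ?thesis using cmod_fbar_le_1[OF X(1)] by (simp add: afun_2pi bfun_2pi)
    next
      case 2
      define r where "r = sqrt (afun \<theta> / bfun \<theta>)"
      define \<delta> where "\<delta> = real_of_ereal (min (2 * eps * ereal \<bar>t\<bar>) (ereal r))"
      have r: "0 < r" "r \<le> 2 * pi"
        using afun_pos[OF 2] bfun_pos[OF 2] sqrt_afun_div_bfun_le[OF 2] by (simp_all add: r_def)
      note \<delta> = min_scale_bounds[OF eps False r(1), folded \<delta>_def]
      have "\<delta> = r \<or> 2 * pi * (L3 * \<bar>t\<bar>) \<le> \<tau> * \<delta>"
        using \<delta>(4)
      proof (rule disj_forward)
        assume "\<exists>\<epsilon>. eps = ereal \<epsilon> \<and> \<delta> = 2 * \<epsilon> * \<bar>t\<bar>"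
        then obtain \<epsilon> where \<epsilon>: "eps = ereal \<epsilon>" "\<delta> = 2 * \<epsilon> * \<bar>t\<bar>" by blast
        then have "0 < \<epsilon>" using eps by simp
        then have "pi * L3 / \<epsilon> \<le> \<tau>"
          using \<tau> L3 order.trans[OF divide_right_mono[OF mult_left_mono[OF L3(2), of pi]]]
          by (auto simp: tau1_def \<epsilon>)
        then show "2 * pi * (L3 * \<bar>t\<bar>) \<le> \<tau> * \<delta>"
          using \<open>0 < \<epsilon>\<close> False by (simp add: \<epsilon>(2) field_simps mult_right_mono)
      qed
      then have "4 * (L3 * \<bar>t\<bar>) / \<delta> * (afun \<theta> + bfun \<theta> * \<delta>\<^sup>2) \<le> 8 * \<tau> * sqrt (afun \<theta> * bfun \<theta>)"
        using scaled_quartic_term_le[OF bfun_pos[OF 2] \<delta>(1,2) r(2) s] sqrt_afun_mult_bfun[OF 2]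
        by (simp add: r_def)
      then have "exp (- (afun \<theta> - 4 * (L3 * \<bar>t\<bar>) / \<delta> * (afun \<theta> + bfun \<theta> * \<delta>\<^sup>2)) * t\<^sup>2)
          \<le> exp (- (afun \<theta> - 8 * \<tau> * sqrt (afun \<theta> * bfun \<theta>)) * t\<^sup>2)"
        by (intro iffD2[OF exp_le_cancel_iff] mult_right_mono) auto
      with cmod_fbar_le_exp_min_scale[OF X eps tail 2 False, folded r_def, folded \<delta>_def]
      show ?thesis by (rule order.trans)
    qed
  qed (use False cmod_fbar_le_1[OF X(1)] in auto)
qed

lemma zLn_le_LE3:
  assumes "0 \<le> \<gamma>" "0 < z" "ereal z \<le> eps"
  shows "ereal (z * Ln M X n z) \<le> LE3 M X n eps \<gamma>"
proof -
  have "ereal (z * Ln M X n z) \<le> ereal (\<gamma> * \<bar>Mn M X n z\<bar> + z * Ln M X n z)"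
    using assms(1) by simp
  also have "\<dots> \<le> LE3 M X n eps \<gamma>" unfolding LE3_def using assms by (intro SUP_upper) auto
  finally show ?thesis .
qed

lemma zLn_le_LR3:
  assumes "0 \<le> \<gamma>" "0 < z" "z \<le> eps"
  shows "ereal (z * Ln M X n z) \<le> LR3 M X n eps \<gamma>"
proof -
  have "ereal (z * Ln M X n z) \<le> (SUP z\<in>{0<..eps}. ereal (z * Ln M X n z))"
    using assms by (intro SUP_upper) auto
  then show ?thesis unfolding LR3_def using assms(1)
    by (metis add_increasing ereal_less_eq(5) abs_ge_zero mult_nonneg_nonneg)
qed

lemma zLn_le_LS3:
  assumes "0 < z" "ereal z \<le> eps" shows "ereal (z * Ln M X n z) \<le> LS3 M X n eps"
  unfolding LS3_def using assms by (intro SUP_upper) auto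

theorem theorem4:
  fixes M :: "'a measure" and X :: "nat \<Rightarrow> 'a \<Rightarrow> real" and n :: nat
    and eps :: ereal and \<gamma> L :: real
  assumes "prob_space M"
    and "prob_space.indep_vars M (\<lambda>_. borel) X {1..n}"
    and "\<And>k. k \<in> {1..n} \<Longrightarrow> X k \<in> borel_measurable M"
    and "\<And>k. k \<in> {1..n} \<Longrightarrow> integrable M (X k)"
    and "\<And>k. k \<in> {1..n} \<Longrightarrow> integrable M (\<lambda>\<omega>. (X k \<omega>)^2)"
    and "\<And>k. k \<in> {1..n} \<Longrightarrow> (LINT \<omega>|M. X k \<omega>) = 0"
    and "(\<Sum>k\<in>{1..n}. LINT \<omega>|M. (X k \<omega>)^2) = 1"
    and "\<gamma> > 0" and "eps > 0"
    and "L > 0"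
    and "ereal (L^3) = LE3 M X n eps \<gamma>
         \<or> (eps \<noteq> \<infinity> \<and> ereal (L^3) = LR3 M X n (real_of_ereal eps) \<gamma>)
         \<or> ereal (L^3) = LS3 M X n eps"
  shows "(\<forall>t::real. cmod (fbar M X n t)
            \<le> exp (- real_of_ereal (k2 (L^3 * \<bar>t\<bar>) (2 * eps * ereal \<bar>t\<bar>)) * t^2))
       \<and> (\<forall>L0 \<tau> t. L0 \<ge> L \<longrightarrow> ereal \<tau> \<ge> tau1 L0 eps \<longrightarrow> \<bar>t\<bar> \<le> \<tau> / L^3 \<longrightarrow>
            cmod (fbar M X n t) \<le> exp (- real_of_ereal (k1 \<tau>) * t^2))
       \<and> (\<forall>\<tau>::real. \<tau> \<ge> 0 \<longrightarrow> (k1 \<tau> > 0 \<longleftrightarrow> \<tau> < pi / 4))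
       \<and> (\<forall>L0. L0 \<ge> L \<longrightarrow>
            ((\<exists>\<tau>::real. tau1 L0 eps \<le> ereal \<tau> \<and> \<tau> < pi / 4) \<longleftrightarrow> ereal L0 < cbrt_quarter eps))"
proof -
  interpret prob_space M by fact
  note X = assms(3-7) and eps = assms(9) and L = assms(10)
  have tail: "z * Ln M X n z \<le> L ^ 3" if "0 < z" "ereal z \<le> eps" for z
  proof -
    have \<gamma>: "0 \<le> \<gamma>" using assms(8) by simp
    from assms(11) have "ereal (z * Ln M X n z) \<le> ereal (L ^ 3)"
    proof (elim disjE conjE)
      assume "eps \<noteq> \<infinity>" "ereal (L ^ 3) = LR3 M X n (real_of_ereal eps) \<gamma>"
      moreover have "z \<le> real_of_ereal eps" using that \<open>eps \<noteq> \<infinity>\<close> by (cases eps) auto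
      ultimately show ?thesis using zLn_le_LR3[OF \<gamma> that(1)] by simp
    qed (use zLn_le_LE3[OF \<gamma> that] zLn_le_LS3[OF that] in simp_all)
    then show ?thesis by simp
  qed
  have L_cube: "L ^ 3 \<le> L0 ^ 3" if "L \<le> L0" for L0 using that L by (intro power_mono) auto
  show ?thesis
    using cmod_fbar_le_exp_k2[OF X eps tail]
      cmod_fbar_le_exp_k1[OF X eps tail zero_less_power[OF L] L_cube]
      k1_pos_iff tau1_le_lt_iff[OF _ eps] L by auto
qed

end
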